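(* There exist a common knowledge debate game, a common knowledge distinguishing debate game, and a private information distinguishing debate game each of which has the following property: the minimum error over all policies is strictly less than the minimum error over policies under which the agents use pure strategies in equilibrium.
   Context: Let $\delta$ be a special default action. CKDG: a tuple $(A_1,A_2,S,P,C_1,C_2,u)$ consisting of finite sets $A_i\not\ni\delta$, a finite set $S$, a probability mass function $P$ on $S$, maps $C_i:S\to\mathcal P(A_i)$, and $u:\{1,2\}\times S\to\mathbb R$. A policy is $M:\{1,2\}\times(A_1\cup\{\delta\})\times(A_2\cup\{\delta\})\to[0,1]$ with $M(1,\cdot,\cdot)+M(2,\cdot,\cdot)=1$. For each scenario $s$ the agents play the zero-sum game with payoff matrices $M(i,\cdot,\cdot)$, with agent 1 restricted to $C_1(s)\cup\{\delta\}$ and agent 2 to $C_2(s)\cup\{\delta\}$; $w^i_M(s)$ is its value to agent $i$. The error is $\mathbb E_{s\sim P}[\,|u(1,s)-u(2,s)|w^1_M(s)$ if $u(1,s)\le u(2,s)$, else $|u(1,s)-u(2,s)|w^2_M(s)\,]$. The agents use pure strategies in equilibrium under $M$ if every scenario's game has a pure-strategy Nash equilibrium. CKDDG: a tuple $(A,S,P,C_w,C_l)$ with $A$ finite, $\delta\notin A$, $S$ finite, $P$ a probability mass function on $S$, and $C_w,C_l:S\to\mathcal P(A)$. Policies, error and pure-strategy equilibria are those of the induced CKDG $(A,A,\{1,2\}\times S,P',C'_1,C'_2,u')$, where: - $P'((i,s))=P(s)/2$; - $C'_j((i,s))=C_w(s)$ if $i=j$, else $C_l(s)$; - $u'(j,(i,s))=[i=j]$.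 PIDDG: a tuple of the same form. A policy is $M:\{1,2\}\times(A\cup\{\delta\})^2\to[0,1]$ with $M(1,\cdot,\cdot)+M(2,\cdot,\cdot)=1$. $G_1(B,M)$ is the following Bayesian game. Each agent has action set $A\cup\{\delta\}$. A scenario $s\sim P$ is drawn, and agent 1's type is $C_w(s)$ while agent 2's is $C_l(s)$. Payoffs are as follows: - if both agents play available actions, agent $i$ gets $M(i,a_1,a_2)$; - if exactly one plays an unavailable action, it gets $0$ and the other gets $1$; - if both play unavailable actions, each gets $1/2$. $G_2(B,M)$ swaps the types. The error is $\frac{v_1(G_2(B,M))+v_2(G_1(B,M))}{2}$, where $v_i$ is the value of the zero-sum Bayesian game to agent $i$. The agents use pure strategies in equilibrium if $G_1(B,M)$ and $G_2(B,M)$ each have a pure-strategy (type-contingent) equilibrium. *)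

theory Defs
  imports Complex_Main
begin

text \<open>The special default action delta is represented by None; an action a
  of a finite action set A is represented by Some a.  Agents are indexed by the
  naturals 1 and 2.\<close>

definition opt :: "'a set \<Rightarrow> 'a option set" where
  "opt A = insert None (Some ` A)"

definition pmf_on :: "'s set \<Rightarrow> ('s \<Rightarrow> real) \<Rightarrow> bool" where
  "pmf_on S P \<longleftrightarrow> (\<forall>s\<in>S. 0 \<le> P s) \<and> sum P S = 1"

definition mixed :: "'x set \<Rightarrow> ('x \<Rightarrow> real) \<Rightarrow> bool" where
  "mixed X p \<longleftrightarrow> (\<forall>x. 0 \<le> p x) \<and> (\<forall>x. x \<notin> X \<longrightarrow> p x = 0) \<and> sum p X = 1"

definition policy :: "'a option set \<Rightarrow> 'b option set \<Rightarrow> (nat \<Rightarrow> 'a option \<Rightarrow> 'b option \<Rightarrow> real) \<Rightarrow> bool" where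
  "policy X Y M \<longleftrightarrow> (\<forall>a\<in>X. \<forall>b\<in>Y. (\<forall>i\<in>{1,2}. 0 \<le> M i a b \<and> M i a b \<le> 1)
                         \<and> M 1 a b + M 2 a b = 1)"

definition strict_min_gap :: "('m \<Rightarrow> bool) \<Rightarrow> ('m \<Rightarrow> bool) \<Rightarrow> ('m \<Rightarrow> real) \<Rightarrow> bool" where
  "strict_min_gap Pol Pure E \<longleftrightarrow>
     (\<exists>M0 M1. Pol M0 \<and> (\<forall>M. Pol M \<longrightarrow> E M0 \<le> E M)
            \<and> Pol M1 \<and> Pure M1 \<and> (\<forall>M. Pol M \<and> Pure M \<longrightarrow> E M1 \<le> E M)
            \<and> E M0 < E M1)"

definition ckdg :: "'a set \<Rightarrow> 'b set \<Rightarrow> 's set \<Rightarrow> ('s \<Rightarrow> real) \<Rightarrow> ('s \<Rightarrow> 'a set) \<Rightarrow> ('s \<Rightarrow> 'b set)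
    \<Rightarrow> (nat \<Rightarrow> 's \<Rightarrow> real) \<Rightarrow> bool" where
  "ckdg A1 A2 S P C1 C2 u \<longleftrightarrow> finite A1 \<and> finite A2 \<and> finite S \<and> pmf_on S P
     \<and> (\<forall>s\<in>S. C1 s \<subseteq> A1 \<and> C2 s \<subseteq> A2)"

text \<open>Value (max-min over mixed strategies, which by the minimax theorem is the value)
  of the scenario-s zero-sum game to agent 1 and to agent 2.\<close>
definition ckdg_w1 :: "('s \<Rightarrow> 'a set) \<Rightarrow> ('s \<Rightarrow> 'b set) \<Rightarrow> (nat \<Rightarrow> 'a option \<Rightarrow> 'b option \<Rightarrow> real) \<Rightarrow> 's \<Rightarrow> real" where
  "ckdg_w1 C1 C2 M s = (SUP x\<in>Collect (mixed (opt (C1 s))).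
       INF b\<in>opt (C2 s). \<Sum>a\<in>opt (C1 s). x a * M 1 a b)"

definition ckdg_w2 :: "('s \<Rightarrow> 'a set) \<Rightarrow> ('s \<Rightarrow> 'b set) \<Rightarrow> (nat \<Rightarrow> 'a option \<Rightarrow> 'b option \<Rightarrow> real) \<Rightarrow> 's \<Rightarrow> real" where
  "ckdg_w2 C1 C2 M s = (SUP y\<in>Collect (mixed (opt (C2 s))).
       INF a\<in>opt (C1 s). \<Sum>b\<in>opt (C2 s). y b * M 2 a b)"

definition ckdg_error :: "'s set \<Rightarrow> ('s \<Rightarrow> real) \<Rightarrow> ('s \<Rightarrow> 'a set) \<Rightarrow> ('s \<Rightarrow> 'b set)
    \<Rightarrow> (nat \<Rightarrow> 's \<Rightarrow> real) \<Rightarrow> (nat \<Rightarrow> 'a option \<Rightarrow> 'b option \<Rightarrow> real) \<Rightarrow> real" where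
  "ckdg_error S P C1 C2 u M = (\<Sum>s\<in>S. P s *
      (if u 1 s \<le> u 2 s then \<bar>u 1 s - u 2 s\<bar> * ckdg_w1 C1 C2 M s
       else \<bar>u 1 s - u 2 s\<bar> * ckdg_w2 C1 C2 M s))"

definition ckdg_pure_eq_at :: "('s \<Rightarrow> 'a set) \<Rightarrow> ('s \<Rightarrow> 'b set) \<Rightarrow> (nat \<Rightarrow> 'a option \<Rightarrow> 'b option \<Rightarrow> real) \<Rightarrow> 's \<Rightarrow> bool" where
  "ckdg_pure_eq_at C1 C2 M s \<longleftrightarrow> (\<exists>a\<in>opt (C1 s). \<exists>b\<in>opt (C2 s).
      (\<forall>a'\<in>opt (C1 s). M 1 a' b \<le> M 1 a b) \<and> (\<forall>b'\<in>opt (C2 s). M 2 a b' \<le> M 2 a b))"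

definition ckdg_pure :: "'s set \<Rightarrow> ('s \<Rightarrow> 'a set) \<Rightarrow> ('s \<Rightarrow> 'b set) \<Rightarrow> (nat \<Rightarrow> 'a option \<Rightarrow> 'b option \<Rightarrow> real) \<Rightarrow> bool" where
  "ckdg_pure S C1 C2 M \<longleftrightarrow> (\<forall>s\<in>S. ckdg_pure_eq_at C1 C2 M s)"

definition ckddg :: "'a set \<Rightarrow> 's set \<Rightarrow> ('s \<Rightarrow> real) \<Rightarrow> ('s \<Rightarrow> 'a set) \<Rightarrow> ('s \<Rightarrow> 'a set) \<Rightarrow> bool" where
  "ckddg A S P Cw Cl \<longleftrightarrow> finite A \<and> finite S \<and> pmf_on S P \<and> (\<forall>s\<in>S. Cw s \<subseteq> A \<and> Cl s \<subseteq> A)"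

definition ind_S :: "'s set \<Rightarrow> (nat \<times> 's) set" where
  "ind_S S = {1,2} \<times> S"
definition ind_P :: "('s \<Rightarrow> real) \<Rightarrow> nat \<times> 's \<Rightarrow> real" where
  "ind_P P = (\<lambda>(i,s). P s / 2)"
definition ind_C :: "nat \<Rightarrow> ('s \<Rightarrow> 'a set) \<Rightarrow> ('s \<Rightarrow> 'a set) \<Rightarrow> nat \<times> 's \<Rightarrow> 'a set" where
  "ind_C j Cw Cl = (\<lambda>(i,s). if i = j then Cw s else Cl s)"
definition ind_u :: "nat \<Rightarrow> nat \<times> 's \<Rightarrow> real" where
  "ind_u j = (\<lambda>(i,s). if i = j then 1 else 0)"

definition ckddg_error :: "'s set \<Rightarrow> ('s \<Rightarrow> real) \<Rightarrow> ('s \<Rightarrow> 'a set) \<Rightarrow> ('s \<Rightarrow> 'a set)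
    \<Rightarrow> (nat \<Rightarrow> 'a option \<Rightarrow> 'a option \<Rightarrow> real) \<Rightarrow> real" where
  "ckddg_error S P Cw Cl M = ckdg_error (ind_S S) (ind_P P) (ind_C 1 Cw Cl) (ind_C 2 Cw Cl) ind_u M"

definition ckddg_pure :: "'s set \<Rightarrow> ('s \<Rightarrow> 'a set) \<Rightarrow> ('s \<Rightarrow> 'a set) \<Rightarrow> (nat \<Rightarrow> 'a option \<Rightarrow> 'a option \<Rightarrow> real) \<Rightarrow> bool" where
  "ckddg_pure S Cw Cl M = ckdg_pure (ind_S S) (ind_C 1 Cw Cl) (ind_C 2 Cw Cl) M"

definition bayes_pay :: "(nat \<Rightarrow> 'a option \<Rightarrow> 'a option \<Rightarrow> real) \<Rightarrow> nat \<Rightarrow> 'a set \<Rightarrow> 'a set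
    \<Rightarrow> 'a option \<Rightarrow> 'a option \<Rightarrow> real" where
  "bayes_pay M i T1 T2 a1 a2 =
     (let av1 = (a1 \<in> opt T1); av2 = (a2 \<in> opt T2) in
      if av1 \<and> av2 then M i a1 a2
      else if av1 \<and> \<not> av2 then (if i = 1 then 1 else 0)
      else if \<not> av1 \<and> av2 then (if i = 1 then 0 else 1)
      else 1/2)"

definition bayes_util :: "'a set \<Rightarrow> 's set \<Rightarrow> ('s \<Rightarrow> real) \<Rightarrow> ('s \<Rightarrow> 'a set) \<Rightarrow> ('s \<Rightarrow> 'a set)
    \<Rightarrow> (nat \<Rightarrow> 'a option \<Rightarrow> 'a option \<Rightarrow> real) \<Rightarrow> nat
    \<Rightarrow> ('a set \<Rightarrow> 'a option \<Rightarrow> real) \<Rightarrow> ('a set \<Rightarrow> 'a option \<Rightarrow> real) \<Rightarrow> real" where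
  "bayes_util A S P T1 T2 M i s1 s2 = (\<Sum>s\<in>S. P s *
     (\<Sum>a1\<in>opt A. \<Sum>a2\<in>opt A. s1 (T1 s) a1 * s2 (T2 s) a2 * bayes_pay M i (T1 s) (T2 s) a1 a2))"

definition bstrat :: "'a set \<Rightarrow> ('a set \<Rightarrow> 'a option \<Rightarrow> real) \<Rightarrow> bool" where
  "bstrat A sg \<longleftrightarrow> (\<forall>t. mixed (opt A) (sg t))"

definition bayes_v1 :: "'a set \<Rightarrow> 's set \<Rightarrow> ('s \<Rightarrow> real) \<Rightarrow> ('s \<Rightarrow> 'a set) \<Rightarrow> ('s \<Rightarrow> 'a set)
    \<Rightarrow> (nat \<Rightarrow> 'a option \<Rightarrow> 'a option \<Rightarrow> real) \<Rightarrow> real" where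
  "bayes_v1 A S P T1 T2 M = (SUP s1\<in>Collect (bstrat A). INF s2\<in>Collect (bstrat A).
      bayes_util A S P T1 T2 M 1 s1 s2)"

definition bayes_v2 :: "'a set \<Rightarrow> 's set \<Rightarrow> ('s \<Rightarrow> real) \<Rightarrow> ('s \<Rightarrow> 'a set) \<Rightarrow> ('s \<Rightarrow> 'a set)
    \<Rightarrow> (nat \<Rightarrow> 'a option \<Rightarrow> 'a option \<Rightarrow> real) \<Rightarrow> real" where
  "bayes_v2 A S P T1 T2 M = (SUP s2\<in>Collect (bstrat A). INF s1\<in>Collect (bstrat A).
      bayes_util A S P T1 T2 M 2 s1 s2)"

definition pure_strat :: "('a set \<Rightarrow> 'a option) \<Rightarrow> 'a set \<Rightarrow> 'a option \<Rightarrow> real" where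
  "pure_strat f = (\<lambda>t a. if a = f t then 1 else 0)"

definition bayes_pure_eq :: "'a set \<Rightarrow> 's set \<Rightarrow> ('s \<Rightarrow> real) \<Rightarrow> ('s \<Rightarrow> 'a set) \<Rightarrow> ('s \<Rightarrow> 'a set)
    \<Rightarrow> (nat \<Rightarrow> 'a option \<Rightarrow> 'a option \<Rightarrow> real) \<Rightarrow> bool" where
  "bayes_pure_eq A S P T1 T2 M \<longleftrightarrow> (\<exists>f1 f2. (\<forall>t. f1 t \<in> opt A) \<and> (\<forall>t. f2 t \<in> opt A) \<and>
     (\<forall>g1. (\<forall>t. g1 t \<in> opt A) \<longrightarrow>
        bayes_util A S P T1 T2 M 1 (pure_strat g1) (pure_strat f2)
          \<le> bayes_util A S P T1 T2 M 1 (pure_strat f1) (pure_strat f2)) \<and>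
     (\<forall>g2. (\<forall>t. g2 t \<in> opt A) \<longrightarrow>
        bayes_util A S P T1 T2 M 2 (pure_strat f1) (pure_strat g2)
          \<le> bayes_util A S P T1 T2 M 2 (pure_strat f1) (pure_strat f2)))"

text \<open>G1 : agent 1 has type Cw s, agent 2 has type Cl s; G2 swaps the types.\<close>
definition piddg_error :: "'a set \<Rightarrow> 's set \<Rightarrow> ('s \<Rightarrow> real) \<Rightarrow> ('s \<Rightarrow> 'a set) \<Rightarrow> ('s \<Rightarrow> 'a set)
    \<Rightarrow> (nat \<Rightarrow> 'a option \<Rightarrow> 'a option \<Rightarrow> real) \<Rightarrow> real" where
  "piddg_error A S P Cw Cl M = (bayes_v1 A S P Cl Cw M + bayes_v2 A S P Cw Cl M) / 2"

definition piddg_pure :: "'a set \<Rightarrow> 's set \<Rightarrow> ('s \<Rightarrow> real) \<Rightarrow> ('s \<Rightarrow> 'a set) \<Rightarrow> ('s \<Rightarrow> 'a set)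
    \<Rightarrow> (nat \<Rightarrow> 'a option \<Rightarrow> 'a option \<Rightarrow> real) \<Rightarrow> bool" where
  "piddg_pure A S P Cw Cl M \<longleftrightarrow> bayes_pure_eq A S P Cw Cl M \<and> bayes_pure_eq A S P Cl Cw M"

end

(* All three examples use the actions 1, 2, 3 and the scenarios 0, 1, 2, 3: in scenario 0 both
   agents hold every action, in scenario k the winner lacks k and the loser holds only k.
   The judge rps plays rock-paper-scissors, the default action losing to every action.  It
   leaves the agent holding a single action k nothing, since the opponent answers with the
   action beating k; but the full game of scenario 0 has no pure equilibrium.  A pure
   equilibrium (a, b) of that full game is available to the single-action agents of some
   scenarios, each of whom can secure M(1,a,b) resp. M(2,a,b), which add up to 1; the
   judge biased attains the resulting bound.  In the common knowledge example scenario 0 has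
   probability 0, giving the errors 0 and 1/6.  In the private information example every
   scenario has probability 1/4 and the types reveal the scenario; every policy then pays at
   least 1/8 in scenario 0 by the minimax inequality, derived from Ville's theorem of the
   alternative by Fourier-Motzkin elimination, and the errors are 1/8 and 1/4. *)

theory Submission
  imports Defs "HOL-Library.Nat_Bijection"
begin

section \<open>Mixed strategies and max-min values\<close>

lemma mixed_sum_le:
  fixes g :: "'x \<Rightarrow> real"
  assumes "mixed X p" "\<And>a. a \<in> X \<Longrightarrow> g a \<le> c"
  shows "(\<Sum>a\<in>X. p a * g a) \<le> c"
proof -
  have "(\<Sum>a\<in>X. p a * g a) \<le> (\<Sum>a\<in>X. p a * c)"
    using assms by (intro sum_mono mult_left_mono) (auto simp: mixed_def)
  also have "\<dots> = c"
    using assms(1) by (simp add: mixed_def sum_distrib_right[symmetric])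
  finally show ?thesis .
qed

lemma mixed_sum_ge:
  fixes g :: "'x \<Rightarrow> real"
  assumes "mixed X p" "\<And>a. a \<in> X \<Longrightarrow> c \<le> g a"
  shows "c \<le> (\<Sum>a\<in>X. p a * g a)"
proof -
  have "c = (\<Sum>a\<in>X. p a * c)"
    using assms(1) by (simp add: mixed_def sum_distrib_right[symmetric])
  also have "\<dots> \<le> (\<Sum>a\<in>X. p a * g a)"
    using assms by (intro sum_mono mult_left_mono) (auto simp: mixed_def)
  finally show ?thesis .
qed

lemma mixed_indicator:
  assumes "finite X" "a \<in> X"
  shows "mixed X (\<lambda>x. if x = a then 1 else 0)"
  using assms unfolding mixed_def by auto

lemma sum_indicator_mult:
  fixes g :: "'x \<Rightarrow> real"
  assumes "finite X" "a \<in> X"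
  shows "(\<Sum>x\<in>X. (if x = a then 1 else 0) * g x) = g a"
  using assms by (simp add: if_distrib[of "\<lambda>c. c * _"] cong: if_cong)

lemma mixed_normalize:
  fixes q :: "'x \<Rightarrow> real"
  assumes "finite X" "\<forall>x\<in>X. 0 \<le> q x" "\<exists>x\<in>X. 0 < q x"
  defines "Q \<equiv> \<Sum>x\<in>X. q x"
  shows "mixed X (\<lambda>x. if x \<in> X then q x / Q else 0)"
    and "(\<Sum>x\<in>X. (if x \<in> X then q x / Q else 0) * g x) = (\<Sum>x\<in>X. q x * g x) / Q"
proof -
  have "0 < Q"
    unfolding Q_def using assms(1-3) by (auto intro: sum_pos2)
  then show "mixed X (\<lambda>x. if x \<in> X then q x / Q else 0)"
    unfolding mixed_def using assms(2) by (simp add: sum_divide_distrib[symmetric] Q_def)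
  show "(\<Sum>x\<in>X. (if x \<in> X then q x / Q else 0) * g x) = (\<Sum>x\<in>X. q x * g x) / Q"
    by (simp add: sum_divide_distrib)
qed

lemma le_SUP_INF:
  fixes F :: "'x \<Rightarrow> 'y \<Rightarrow> real"
  assumes "x0 \<in> X" "Y \<noteq> {}" "\<And>x y. x \<in> X \<Longrightarrow> y \<in> Y \<Longrightarrow> 0 \<le> F x y \<and> F x y \<le> 1"
    and "\<And>y. y \<in> Y \<Longrightarrow> c \<le> F x0 y"
  shows "c \<le> (SUP x\<in>X. INF y\<in>Y. F x y)"
proof -
  obtain y0 where y0: "y0 \<in> Y" using assms(2) by auto
  have bdd: "bdd_below (F x ` Y)" if "x \<in> X" for x
    using assms(3) that by (intro bdd_belowI[of _ 0]) auto
  have "(INF y\<in>Y. F x y) \<le> 1" if "x \<in> X" for x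
    using cINF_lower[OF bdd[OF that] y0] assms(3)[OF that y0] by linarith
  then have "bdd_above ((\<lambda>x. INF y\<in>Y. F x y) ` X)"
    by (intro bdd_aboveI[of _ 1]) auto
  moreover have "c \<le> (INF y\<in>Y. F x0 y)"
    using assms(2,4) by (intro cINF_greatest) auto
  ultimately show ?thesis
    using assms(1) by (blast intro: cSUP_upper2)
qed

lemma SUP_INF_le:
  fixes F :: "'x \<Rightarrow> 'y \<Rightarrow> real"
  assumes "X \<noteq> {}" "\<And>x y. x \<in> X \<Longrightarrow> y \<in> Y \<Longrightarrow> 0 \<le> F x y"
    and "\<And>x. x \<in> X \<Longrightarrow> \<exists>y\<in>Y. F x y \<le> c"
  shows "(SUP x\<in>X. INF y\<in>Y. F x y) \<le> c"
proof (rule cSUP_least[OF assms(1)])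
  fix x assume x: "x \<in> X"
  then obtain y where y: "y \<in> Y" "F x y \<le> c" using assms(3) by blast
  have "bdd_below (F x ` Y)" using assms(2) x by (intro bdd_belowI[of _ 0]) auto
  then show "(INF y\<in>Y. F x y) \<le> c" using y by (meson cINF_lower order_trans)
qed

definition maxmin :: "'x set \<Rightarrow> 'y set \<Rightarrow> ('x \<Rightarrow> 'y \<Rightarrow> real) \<Rightarrow> real" where
  "maxmin X Y f = (SUP p\<in>Collect (mixed X). INF b\<in>Y. \<Sum>a\<in>X. p a * f a b)"

lemma maxmin_ge_mixed:
  assumes "Y \<noteq> {}" "\<And>a b. a \<in> X \<Longrightarrow> b \<in> Y \<Longrightarrow> 0 \<le> f a b \<and> f a b \<le> 1" "mixed X p"
    and "\<And>b. b \<in> Y \<Longrightarrow> c \<le> (\<Sum>a\<in>X. p a * f a b)"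
  shows "c \<le> maxmin X Y f"
  unfolding maxmin_def
proof (rule le_SUP_INF[of p])
  fix p' b assume "p' \<in> Collect (mixed X)" "b \<in> Y"
  then show "0 \<le> (\<Sum>a\<in>X. p' a * f a b) \<and> (\<Sum>a\<in>X. p' a * f a b) \<le> 1"
    using assms(2) by (simp add: mixed_sum_le mixed_sum_ge)
qed (use assms(1,3,4) in auto)

lemma maxmin_ge:
  assumes "finite X" "Y \<noteq> {}" "\<And>a b. a \<in> X \<Longrightarrow> b \<in> Y \<Longrightarrow> 0 \<le> f a b \<and> f a b \<le> 1" "a \<in> X"
    and "\<And>b. b \<in> Y \<Longrightarrow> c \<le> f a b"
  shows "c \<le> maxmin X Y f"
proof (rule maxmin_ge_mixed[OF assms(2,3) mixed_indicator[OF assms(1,4)]])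
  fix b assume "b \<in> Y"
  then show "c \<le> (\<Sum>x\<in>X. (if x = a then 1 else 0) * f x b)"
    unfolding sum_indicator_mult[OF assms(1,4)] by (rule assms(5))
qed

lemma maxmin_ge_weights:
  fixes w :: "'x \<Rightarrow> real"
  assumes "finite X" "Y \<noteq> {}" "\<And>a b. a \<in> X \<Longrightarrow> b \<in> Y \<Longrightarrow> 0 \<le> f a b \<and> f a b \<le> 1"
    and w: "\<forall>a\<in>X. 0 \<le> w a" "\<exists>a\<in>X. 0 < w a"
    and guarantee: "\<And>b. b \<in> Y \<Longrightarrow> t * (\<Sum>a\<in>X. w a) \<le> (\<Sum>a\<in>X. w a * f a b)"
  shows "t \<le> maxmin X Y f"
proof (rule maxmin_ge_mixed[OF assms(2,3) mixed_normalize(1)[OF assms(1) w]])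
  fix b assume "b \<in> Y"
  have "0 < (\<Sum>a\<in>X. w a)" using assms(1) w by (auto intro: sum_pos2)
  then have "t \<le> (\<Sum>a\<in>X. w a * f a b) / (\<Sum>a\<in>X. w a)"
    using guarantee[OF \<open>b \<in> Y\<close>] by (simp add: pos_le_divide_eq)
  then show "t \<le> (\<Sum>a\<in>X. (if a \<in> X then w a / (\<Sum>a\<in>X. w a) else 0) * f a b)"
    unfolding mixed_normalize(2)[OF assms(1) w] .
qed

lemma maxmin_le_guarantee:
  assumes "finite X" "X \<noteq> {}" "\<And>a b. a \<in> X \<Longrightarrow> b \<in> Y \<Longrightarrow> 0 \<le> f a b"
    and "\<And>p t. mixed X p \<Longrightarrow> (\<And>b. b \<in> Y \<Longrightarrow> t \<le> (\<Sum>a\<in>X. p a * f a b)) \<Longrightarrow> t \<le> c"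
  shows "maxmin X Y f \<le> c"
  unfolding maxmin_def
proof (rule cSUP_least)
  obtain a where "a \<in> X" using assms(2) by blast
  then show "Collect (mixed X) \<noteq> {}"
    using mixed_indicator[OF assms(1)] by blast
  fix p assume "p \<in> Collect (mixed X)"
  then have p: "mixed X p" by simp
  have "0 \<le> (\<Sum>a\<in>X. p a * f a b)" if "b \<in> Y" for b
    using p by (rule mixed_sum_ge) (use assms(3) that in blast)
  then have "bdd_below ((\<lambda>b. \<Sum>a\<in>X. p a * f a b) ` Y)"
    by (intro bdd_belowI[of _ 0]) blast
  then show "(INF b\<in>Y. \<Sum>a\<in>X. p a * f a b) \<le> c"
    by (intro assms(4)[OF p] cINF_lower)
qed

lemma maxmin_le:
  assumes "finite X" "X \<noteq> {}" "\<And>a b. a \<in> X \<Longrightarrow> b \<in> Y \<Longrightarrow> 0 \<le> f a b" "b \<in> Y"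
    and "\<And>a. a \<in> X \<Longrightarrow> f a b \<le> c"
  shows "maxmin X Y f \<le> c"
proof (rule maxmin_le_guarantee[OF assms(1-3)])
  fix p t assume "mixed X p" "\<And>b. b \<in> Y \<Longrightarrow> t \<le> (\<Sum>a\<in>X. p a * f a b)"
  then have "t \<le> (\<Sum>a\<in>X. p a * f a b)" using assms(4) by blast
  also have "\<dots> \<le> c" using \<open>mixed X p\<close> assms(5) by (rule mixed_sum_le)
  finally show "t \<le> c" .
qed

lemma maxmin_cong:
  "(\<And>a b. a \<in> X \<Longrightarrow> b \<in> Y \<Longrightarrow> f a b = g a b) \<Longrightarrow> maxmin X Y f = maxmin X Y g"
  unfolding maxmin_def by (intro SUP_cong INF_cong sum.cong refl) auto

section \<open>Ville's alternative and the minimax inequality\<close>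

lemma finite_sets_separated:
  fixes L U :: "real set"
  assumes "finite L" "finite U" "\<And>a b. a \<in> L \<Longrightarrow> b \<in> U \<Longrightarrow> a < b"
  shows "\<exists>t. (\<forall>a\<in>L. a < t) \<and> (\<forall>b\<in>U. t < b)"
proof (cases "L = {}")
  case True
  have "Min (insert 0 U) - 1 < b" if "b \<in> U" for b
  proof -
    have "Min (insert 0 U) \<le> b" using assms(2) that by (intro Min.coboundedI) auto
    then show ?thesis by linarith
  qed
  then show ?thesis using True by blast
next
  case L: False
  show ?thesis
  proof (cases "U = {}")
    case True
    have "a < Max L + 1" if "a \<in> L" for a
    proof -
      have "a \<le> Max L" using assms(1) that by (intro Max.coboundedI) auto
      then show ?thesis by linarith
    qed
    then show ?thesis using True by blast
  next
    case False
    then have "Max L < Min U" using L assms by auto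
    then show ?thesis
      using assms(1,2) by (intro exI[of _ "(Max L + Min U) / 2"]) (auto dest: Max_ge Min_le)
  qed
qed

lemma strict_linear_system_one_variable:
  fixes c s :: "'r \<Rightarrow> real"
  assumes "finite R"
    and nonneg: "\<And>r. r \<in> R \<Longrightarrow> 0 \<le> c r \<Longrightarrow> s r < 0"
    and mixed_signs: "\<And>i l. i \<in> R \<Longrightarrow> l \<in> R \<Longrightarrow> 0 < c i \<Longrightarrow> c l < 0 \<Longrightarrow> c i * s l < c l * s i"
  shows "\<exists>t\<ge>0. \<forall>r\<in>R. c r * t + s r < 0"
proof -
  let ?L = "insert 0 ((\<lambda>l. s l / - c l) ` {l \<in> R. c l < 0})"
  let ?U = "(\<lambda>i. - s i / c i) ` {i \<in> R. 0 < c i}"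
  have "\<exists>t. (\<forall>a\<in>?L. a < t) \<and> (\<forall>b\<in>?U. t < b)"
  proof (rule finite_sets_separated)
    fix a b assume a: "a \<in> ?L" and b: "b \<in> ?U"
    then obtain i where i: "i \<in> R" "0 < c i" "b = - s i / c i" by auto
    have "0 < - s i / c i" using i nonneg[of i] by (simp add: divide_neg_pos)
    moreover have "s l / - c l < - s i / c i" if "l \<in> R" "c l < 0" for l
      using mixed_signs[OF i(1) that(1) i(2) that(2)] i(2) that(2) by (simp add: field_simps)
    ultimately show "a < b" using a i(3) by auto
  qed (use assms(1) in auto)
  then obtain t where lower: "\<forall>a\<in>?L. a < t" and upper: "\<forall>b\<in>?U. t < b" by blast
  show ?thesis
  proof (intro exI conjI ballI)
    show "0 \<le> t" using lower by auto
    fix r assume r: "r \<in> R"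
    consider "c r < 0" | "c r = 0" | "0 < c r" by linarith
    then show "c r * t + s r < 0"
    proof cases
      case 1
      then have "s r / - c r < t" using lower r by auto
      then show ?thesis using 1 by (simp add: field_simps)
    next
      case 2
      then show ?thesis using nonneg[OF r] by simp
    next
      case 3
      then have "t < - s r / c r" using upper r by auto
      then show ?thesis using 3 by (simp add: field_simps)
    qed
  qed
qed

definition fourier_motzkin_comb :: "'j \<Rightarrow> ('j \<Rightarrow> real) \<Rightarrow> ('j \<Rightarrow> real) \<Rightarrow> 'j \<Rightarrow> real" where
  "fourier_motzkin_comb k i l = (\<lambda>j. i k * l j - l k * i j)"

text \<open>Rows with a positive \<open>k\<close>-th entry are kept besides the combinations cancelling that
  entry, because the eliminated variable is required to be nonnegative.\<close>

definition fourier_motzkin_elim :: "'j \<Rightarrow> ('j \<Rightarrow> real) set \<Rightarrow> ('j \<Rightarrow> real) set" where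
  "fourier_motzkin_elim k R = {r \<in> R. 0 \<le> r k}
     \<union> (\<lambda>(i, l). fourier_motzkin_comb k i l) ` ({r \<in> R. 0 < r k} \<times> {r \<in> R. r k < 0})"

lemma finite_fourier_motzkin_elim: "finite R \<Longrightarrow> finite (fourier_motzkin_elim k R)"
  unfolding fourier_motzkin_elim_def by auto

lemma fourier_motzkin_lift_solution:
  fixes R :: "('j \<Rightarrow> real) set"
  assumes "finite R" "finite J" "k \<notin> J" "\<forall>j\<in>J. 0 \<le> q j"
    and q: "\<forall>r\<in>fourier_motzkin_elim k R. (\<Sum>j\<in>J. r j * q j) < 0"
  shows "\<exists>q'. (\<forall>j\<in>insert k J. 0 \<le> q' j) \<and> (\<forall>r\<in>R. (\<Sum>j\<in>insert k J. r j * q' j) < 0)"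
proof -
  define S where "S r = (\<Sum>j\<in>J. r j * q j)" for r
  have "\<exists>t\<ge>0. \<forall>r\<in>R. r k * t + S r < 0"
  proof (rule strict_linear_system_one_variable[OF assms(1)])
    show "S r < 0" if "r \<in> R" "0 \<le> r k" for r
      using q that unfolding fourier_motzkin_elim_def S_def by auto
    show "i k * S l < l k * S i" if "i \<in> R" "l \<in> R" "0 < i k" "l k < 0" for i l
    proof -
      have "fourier_motzkin_comb k i l \<in> fourier_motzkin_elim k R"
        using that unfolding fourier_motzkin_elim_def by force
      then have "S (fourier_motzkin_comb k i l) < 0" using q unfolding S_def by blast
      then show ?thesis
        unfolding S_def fourier_motzkin_comb_def by (simp add: sum_subtractf sum_distrib_left algebra_simps)
    qed
  qed
  then obtain t where "0 \<le> t" "\<forall>r\<in>R. r k * t + S r < 0" by blast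
  moreover have "(\<Sum>j\<in>insert k J. r j * (q(k := t)) j) = r k * t + S r" for r
    unfolding S_def using assms(2,3) by (auto intro: sum.cong)
  ultimately show ?thesis using assms(4) by (intro exI[of _ "q(k := t)"]) auto
qed

lemma fourier_motzkin_elim_nonneg_combination:
  fixes R :: "('j \<Rightarrow> real) set"
  assumes "finite R" "g \<in> fourier_motzkin_elim k R"
  shows "0 \<le> g k \<and> (\<exists>c. (\<forall>r\<in>R. 0 \<le> c r) \<and> (\<exists>r\<in>R. 0 < c r) \<and> (\<forall>j. (\<Sum>r\<in>R. c r * r j) = g j))"
proof (cases "g \<in> R \<and> 0 \<le> g k")
  case True
  then show ?thesis
    using assms(1) by (intro conjI exI[of _ "\<lambda>r. if r = g then 1 else 0"]) (auto simp: sum_indicator_mult)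
next
  case False
  then obtain i l where il: "i \<in> R" "0 < i k" "l \<in> R" "l k < 0" "g = fourier_motzkin_comb k i l"
    using assms(2) unfolding fourier_motzkin_elim_def by auto
  define c where "c r = (if r = i then - l k else 0) + (if r = l then i k else 0)" for r
  have "i \<noteq> l" using il by auto
  have "(\<Sum>r\<in>R. c r * r j) = (\<Sum>r\<in>R. (if r = i then - l k * i j else 0) + (if r = l then i k * l j else 0))" for j
    unfolding c_def by (intro sum.cong) auto
  also have "\<dots> j = g j" for j
    using assms(1) il by (simp add: sum.distrib fourier_motzkin_comb_def)
  moreover have "0 < c i" "\<forall>r\<in>R. 0 \<le> c r"
    using il \<open>i \<noteq> l\<close> by (auto simp: c_def)
  ultimately show ?thesis
    using il by (auto simp: fourier_motzkin_comb_def)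
qed

lemma fourier_motzkin_lift_certificate:
  fixes R :: "('j \<Rightarrow> real) set"
  assumes "finite R"
    and p: "\<forall>g\<in>fourier_motzkin_elim k R. 0 \<le> p g" "\<exists>g\<in>fourier_motzkin_elim k R. 0 < p g"
      "\<forall>j\<in>J. 0 \<le> (\<Sum>g\<in>fourier_motzkin_elim k R. p g * g j)"
  shows "\<exists>p'. (\<forall>r\<in>R. 0 \<le> p' r) \<and> (\<exists>r\<in>R. 0 < p' r) \<and> (\<forall>j\<in>insert k J. 0 \<le> (\<Sum>r\<in>R. p' r * r j))"
proof -
  let ?E = "fourier_motzkin_elim k R"
  have fin: "finite ?E" using assms(1) by (rule finite_fourier_motzkin_elim)
  have "\<forall>g\<in>?E. \<exists>c. (\<forall>r\<in>R. 0 \<le> c r) \<and> (\<exists>r\<in>R. 0 < c r) \<and> (\<forall>j. (\<Sum>r\<in>R. c r * r j) = g j)"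
    using fourier_motzkin_elim_nonneg_combination[OF assms(1)] by blast
  from bchoice[OF this] obtain c where c: "\<forall>g\<in>?E. (\<forall>r\<in>R. 0 \<le> c g r) \<and> (\<exists>r\<in>R. 0 < c g r) \<and> (\<forall>j. (\<Sum>r\<in>R. c g r * r j) = g j)"
    by blast
  have g_k: "0 \<le> g k" if "g \<in> ?E" for g
    using fourier_motzkin_elim_nonneg_combination[OF assms(1) that] by blast
  define p' where "p' r = (\<Sum>g\<in>?E. p g * c g r)" for r
  have p'_nonneg: "0 \<le> p' r" if "r \<in> R" for r
    unfolding p'_def using p(1) c that by (intro sum_nonneg mult_nonneg_nonneg) auto
  have "\<exists>r\<in>R. 0 < p' r"
  proof -
    obtain g where g: "g \<in> ?E" "0 < p g" using p(2) by blast
    then obtain r where r: "r \<in> R" "0 < c g r" using c by metis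
    have "p g * c g r \<le> p' r"
      unfolding p'_def using fin g r p(1) c by (intro member_le_sum[where f = "\<lambda>g. p g * c g r"]) auto
    moreover have "0 < p g * c g r" using g r by simp
    ultimately show ?thesis using r by force
  qed
  moreover have "(\<Sum>r\<in>R. p' r * r j) = (\<Sum>g\<in>?E. p g * g j)" for j
  proof -
    have "(\<Sum>r\<in>R. p' r * r j) = (\<Sum>r\<in>R. \<Sum>g\<in>?E. p g * (c g r * r j))"
      unfolding p'_def by (simp add: sum_distrib_right mult.assoc)
    also have "\<dots> = (\<Sum>g\<in>?E. p g * (\<Sum>r\<in>R. c g r * r j))"
      by (subst sum.swap) (simp add: sum_distrib_left)
    also have "\<dots> = (\<Sum>g\<in>?E. p g * g j)" using c by (intro sum.cong) auto
    finally show ?thesis .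
  qed
  moreover have "0 \<le> (\<Sum>g\<in>?E. p g * g k)"
    using p(1) g_k by (intro sum_nonneg) simp
  ultimately show ?thesis using p'_nonneg p(3) by (intro exI[of _ p']) auto
qed

theorem ville_alternative:
  fixes R :: "('j \<Rightarrow> real) set"
  assumes "finite J" "finite R"
  shows "(\<exists>q. (\<forall>j\<in>J. 0 \<le> q j) \<and> (\<forall>r\<in>R. (\<Sum>j\<in>J. r j * q j) < 0))
       \<or> (\<exists>p. (\<forall>r\<in>R. 0 \<le> p r) \<and> (\<exists>r\<in>R. 0 < p r) \<and> (\<forall>j\<in>J. 0 \<le> (\<Sum>r\<in>R. p r * r j)))"
  using assms
proof (induction J arbitrary: R rule: finite_induct)
  case empty
  then show ?case by (cases "R = {}") (auto intro!: exI[of _ "\<lambda>_. 1 :: real"])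
next
  case (insert k J)
  from insert.IH[OF finite_fourier_motzkin_elim[OF insert.prems]] show ?case
    using fourier_motzkin_lift_solution[OF insert.prems insert.hyps(1,2)]
      fourier_motzkin_lift_certificate[OF insert.prems] by blast
qed

lemma ville_alternative_family:
  fixes v :: "'i \<Rightarrow> 'j \<Rightarrow> real"
  assumes "finite J" "finite I"
  shows "(\<exists>q. (\<forall>j\<in>J. 0 \<le> q j) \<and> (\<forall>i\<in>I. (\<Sum>j\<in>J. v i j * q j) < 0))
       \<or> (\<exists>p. (\<forall>i\<in>I. 0 \<le> p i) \<and> (\<exists>i\<in>I. 0 < p i) \<and> (\<forall>j\<in>J. 0 \<le> (\<Sum>i\<in>I. p i * v i j)))"
  using ville_alternative[OF assms(1) finite_imageI[OF assms(2)], of v]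
proof (elim disjE exE conjE)
  fix p assume p_nonneg: "\<forall>r\<in>v ` I. 0 \<le> p r" and p_pos: "\<exists>r\<in>v ` I. 0 < p r"
    and p_J: "\<forall>j\<in>J. 0 \<le> (\<Sum>r\<in>v ` I. p r * r j)"
  define rep where "rep r = inv_into I v r" for r
  have rep: "rep r \<in> I" "v (rep r) = r" if "r \<in> v ` I" for r
    using that unfolding rep_def by (auto intro: inv_into_into f_inv_into_f)
  define p' where "p' i = (if i = rep (v i) then p (v i) else 0)" for i
  have "(\<Sum>i\<in>I. p' i * v i j) = (\<Sum>r\<in>v ` I. p r * r j)" for j
  proof -
    have "(\<Sum>i\<in>I. p' i * v i j) = (\<Sum>r\<in>v ` I. \<Sum>i\<in>{i\<in>I. v i = r}. p' i * v i j)"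
      by (rule sum.image_gen[OF assms(2)])
    also have "\<dots> = (\<Sum>r\<in>v ` I. p r * r j)"
    proof (rule sum.cong[OF refl])
      fix r assume r: "r \<in> v ` I"
      have "(\<Sum>i\<in>{i\<in>I. v i = r}. p' i * v i j) = (\<Sum>i\<in>{i\<in>I. v i = r}. if i = rep r then p r * r j else 0)"
        by (intro sum.cong) (auto simp: p'_def)
      also have "\<dots> = p r * r j"
        using rep[OF r] assms(2) by simp
      finally show "(\<Sum>i\<in>{i\<in>I. v i = r}. p' i * v i j) = p r * r j" .
    qed
    finally show ?thesis .
  qed
  moreover have "\<forall>i\<in>I. 0 \<le> p' i"
    using p_nonneg by (simp add: p'_def)
  moreover have "\<exists>i\<in>I. 0 < p' i"
  proof -
    obtain r where r: "r \<in> v ` I" "0 < p r" using p_pos by blast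
    then show ?thesis using rep[OF r(1)] by (intro bexI[of _ "rep r"]) (auto simp: p'_def)
  qed
  ultimately show ?thesis using p_J by (intro disjI2 exI[of _ p']) auto
qed auto

text \<open>Ville's alternative for the payoffs shifted by slightly more than the row player's value
  yields either a column strategy holding the row player below that level, or a row strategy
  exceeding the row player's value.\<close>

theorem maxmin_add_maxmin_complement:
  fixes f :: "'x \<Rightarrow> 'y \<Rightarrow> real"
  assumes "finite X" "finite Y" "X \<noteq> {}" "Y \<noteq> {}"
    and f: "\<And>a b. a \<in> X \<Longrightarrow> b \<in> Y \<Longrightarrow> 0 \<le> f a b \<and> f a b \<le> 1"
  shows "1 \<le> maxmin X Y f + maxmin Y X (\<lambda>b a. 1 - f a b)"
proof (rule field_le_epsilon)
  fix e :: real assume "0 < e"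
  define t where "t = maxmin X Y f + e"
  from ville_alternative_family[OF assms(2,1), of "\<lambda>a b. f a b - t"]
  show "1 \<le> maxmin X Y f + maxmin Y X (\<lambda>b a. 1 - f a b) + e"
  proof (elim disjE exE conjE)
    fix q assume q_nonneg: "\<forall>b\<in>Y. 0 \<le> q b" and q: "\<forall>a\<in>X. (\<Sum>b\<in>Y. (f a b - t) * q b) < 0"
    have q_pos: "\<exists>b\<in>Y. 0 < q b"
    proof (rule ccontr)
      assume "\<not> ?thesis"
      then have "\<forall>b\<in>Y. q b = 0" using q_nonneg by force
      then show False using q assms(3) by auto
    qed
    have "1 - t \<le> maxmin Y X (\<lambda>b a. 1 - f a b)"
    proof (rule maxmin_ge_weights[OF assms(2,3) _ q_nonneg q_pos])
      show "0 \<le> 1 - f a b \<and> 1 - f a b \<le> 1" if "b \<in> Y" "a \<in> X" for a b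
        using f[OF that(2,1)] by linarith
      show "(1 - t) * (\<Sum>b\<in>Y. q b) \<le> (\<Sum>b\<in>Y. q b * (1 - f a b))" if "a \<in> X" for a
        using q that by (simp add: algebra_simps sum_subtractf sum_distrib_left less_imp_le)
    qed
    then show ?thesis unfolding t_def by simp
  next
    fix p assume p_nonneg: "\<forall>a\<in>X. 0 \<le> p a" and p_pos: "\<exists>a\<in>X. 0 < p a"
      and p: "\<forall>b\<in>Y. 0 \<le> (\<Sum>a\<in>X. p a * (f a b - t))"
    have "t \<le> maxmin X Y f"
    proof (rule maxmin_ge_weights[OF assms(1,4) f p_nonneg p_pos])
      show "t * (\<Sum>a\<in>X. p a) \<le> (\<Sum>a\<in>X. p a * f a b)" if "b \<in> Y" for b
        using p that by (simp add: algebra_simps sum_subtractf sum_distrib_left)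
    qed
    then show ?thesis using \<open>0 < e\<close> unfolding t_def by simp
  qed
qed

section \<open>Policies and common knowledge games\<close>

lemma strict_min_gap_intro:
  assumes "Pol M_opt" "\<And>M. Pol M \<Longrightarrow> e_opt \<le> E M" "E M_opt \<le> e_opt"
    and "Pol M_pure" "Pure M_pure" "\<And>M. Pol M \<Longrightarrow> Pure M \<Longrightarrow> e_pure \<le> E M" "E M_pure \<le> e_pure"
    and "e_opt < e_pure"
  shows "strict_min_gap Pol Pure E"
proof -
  have "\<forall>M. Pol M \<longrightarrow> E M_opt \<le> E M"
    using assms(2,3) by (meson order_trans)
  moreover have "\<forall>M. Pol M \<and> Pure M \<longrightarrow> E M_pure \<le> E M"
    using assms(6,7) by (meson order_trans)
  moreover have "E M_opt < E M_pure"
    using assms(2)[OF assms(4)] assms(3,7,8) assms(6)[OF assms(4,5)] by linarith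
  ultimately show ?thesis
    unfolding strict_min_gap_def using assms(1,4,5) by blast
qed

lemma finite_opt [simp]: "finite A \<Longrightarrow> finite (opt A)"
  unfolding opt_def by simp

lemma None_in_opt: "None \<in> opt A"
  unfolding opt_def by simp

lemma opt_nonempty: "opt A \<noteq> {}"
  unfolding opt_def by simp

lemma opt_mono: "C \<subseteq> A \<Longrightarrow> opt C \<subseteq> opt A"
  unfolding opt_def by auto

lemma policy_bounds:
  "policy X Y M \<Longrightarrow> a \<in> X \<Longrightarrow> b \<in> Y \<Longrightarrow> i \<in> {1, 2} \<Longrightarrow> 0 \<le> M i a b \<and> M i a b \<le> 1"
  unfolding policy_def by blast

lemma policy_agent2:
  "policy X Y M \<Longrightarrow> a \<in> X \<Longrightarrow> b \<in> Y \<Longrightarrow> M 2 a b = 1 - M 1 a b"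
  unfolding policy_def by (metis add_diff_cancel_left')

definition transpose_policy :: "(nat \<Rightarrow> 'a \<Rightarrow> 'b \<Rightarrow> real) \<Rightarrow> nat \<Rightarrow> 'b \<Rightarrow> 'a \<Rightarrow> real" where
  "transpose_policy M i b a = M (if i = 1 then 2 else 1) a b"

lemma policy_transpose: "policy X Y M \<Longrightarrow> policy Y X (transpose_policy M)"
  unfolding policy_def transpose_policy_def by (simp add: add.commute)

lemma transpose_policy_1: "transpose_policy M 1 b a = M 2 a b"
  and transpose_policy_2: "transpose_policy M 2 b a = M 1 a b"
  by (simp_all add: transpose_policy_def)

lemma equilibrium_payoff_le_maxmin:
  assumes "policy X Y M" "finite X'" "X' \<subseteq> X" "Y' \<subseteq> Y" "Y' \<noteq> {}" "a \<in> X'" "b \<in> Y"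
    and best_reply: "\<forall>b'\<in>Y. M 2 a b' \<le> M 2 a b"
  shows "M 1 a b \<le> maxmin X' Y' (M 1)"
proof (rule maxmin_ge[OF assms(2,5) _ assms(6)])
  show "0 \<le> M 1 a' b' \<and> M 1 a' b' \<le> 1" if "a' \<in> X'" "b' \<in> Y'" for a' b'
    using policy_bounds[OF assms(1)] assms(3,4) that by blast
  show "M 1 a b \<le> M 1 a b'" if "b' \<in> Y'" for b'
  proof -
    have "b' \<in> Y" "a \<in> X" using that assms(3,4,6) by auto
    then show ?thesis using best_reply policy_agent2[OF assms(1)] assms(7) by fastforce
  qed
qed

lemma ckdg_w1_eq_maxmin: "ckdg_w1 C1 C2 M s = maxmin (opt (C1 s)) (opt (C2 s)) (M 1)"
  unfolding ckdg_w1_def maxmin_def ..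

lemma ckdg_w2_eq_w1_transpose: "ckdg_w2 C1 C2 M s = ckdg_w1 C2 C1 (transpose_policy M) s"
  unfolding ckdg_w1_def ckdg_w2_def transpose_policy_1 ..

lemma ckdg_error_reindex:
  assumes "inj_on h S"
  shows "ckdg_error (h ` S) P C1 C2 u M = ckdg_error S (P \<circ> h) (C1 \<circ> h) (C2 \<circ> h) (\<lambda>i. u i \<circ> h) M"
  unfolding ckdg_error_def sum.reindex[OF assms]
  by (intro sum.cong) (simp_all add: ckdg_w1_def ckdg_w2_def)

lemma ckdg_pure_reindex: "ckdg_pure (h ` S) C1 C2 M = ckdg_pure S (C1 \<circ> h) (C2 \<circ> h) M"
  unfolding ckdg_pure_def ckdg_pure_eq_at_def by simp

lemma ckdg_reindex:
  assumes "inj_on h S" "ckdg A1 A2 S (P \<circ> h) (C1 \<circ> h) (C2 \<circ> h) (\<lambda>i. u i \<circ> h)"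
  shows "ckdg A1 A2 (h ` S) P C1 C2 u"
  using assms unfolding ckdg_def pmf_on_def by (simp add: sum.reindex)

lemma ckdg_induced:
  assumes "ckddg A S P Cw Cl"
  shows "ckdg A A (ind_S S) (ind_P P) (ind_C 1 Cw Cl) (ind_C 2 Cw Cl) ind_u"
proof -
  have "sum (ind_P P) (ind_S S) = sum P S"
    unfolding ind_S_def ind_P_def by (simp add: sum.cartesian_product[symmetric] sum_divide_distrib[symmetric])
  then show ?thesis
    using assms unfolding ckdg_def ckddg_def pmf_on_def ind_S_def ind_P_def ind_C_def by auto
qed

text \<open>The scenarios \<open>(i, s)\<close> of the induced game are renumbered by \<open>prod_encode\<close>, since the
  statement asks for natural-number scenarios.\<close>

lemma ckdg_gap_of_ckddg_gap:
  fixes S :: "nat set"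
  assumes "ckddg A S P Cw Cl"
    and "strict_min_gap (policy (opt A) (opt A)) (ckddg_pure S Cw Cl) (ckddg_error S P Cw Cl)"
  shows "\<exists>(S' :: nat set) P' C1 C2 u. ckdg A A S' P' C1 C2 u \<and>
           strict_min_gap (policy (opt A) (opt A)) (ckdg_pure S' C1 C2) (ckdg_error S' P' C1 C2 u)"
proof (intro exI conjI)
  let ?S' = "prod_encode ` ind_S S"
  let ?P' = "ind_P P \<circ> prod_decode"
  let ?C1 = "ind_C 1 Cw Cl \<circ> prod_decode" and ?C2 = "ind_C 2 Cw Cl \<circ> prod_decode"
  let ?u = "\<lambda>i. ind_u i \<circ> prod_decode"
  have comp: "f \<circ> prod_decode \<circ> prod_encode = f" for f :: "nat \<times> nat \<Rightarrow> 'b"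
    by (simp add: fun_eq_iff)
  show "ckdg A A ?S' ?P' ?C1 ?C2 ?u"
    using ckdg_induced[OF assms(1)] by (intro ckdg_reindex[OF inj_prod_encode]) (simp only: comp)
  have "ckdg_pure ?S' ?C1 ?C2 = ckddg_pure S Cw Cl"
    unfolding ckdg_pure_reindex comp ckddg_pure_def ..
  moreover have "ckdg_error ?S' ?P' ?C1 ?C2 ?u = ckddg_error S P Cw Cl"
    unfolding ckdg_error_reindex[OF inj_prod_encode] comp ckddg_error_def by (simp add: comp_assoc)
  ultimately show "strict_min_gap (policy (opt A) (opt A)) (ckdg_pure ?S' ?C1 ?C2) (ckdg_error ?S' ?P' ?C1 ?C2 ?u)"
    using assms(2) by simp
qed

section \<open>Bayesian games\<close>

lemma pmf_on_finite: "pmf_on S P \<Longrightarrow> finite S"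
  unfolding pmf_on_def by (metis sum.infinite zero_neq_one)

lemma bayes_pay_bounds:
  assumes "policy (opt A) (opt A) M" "a1 \<in> opt A" "a2 \<in> opt A" "i \<in> {1, 2}"
  shows "0 \<le> bayes_pay M i T1 T2 a1 a2 \<and> bayes_pay M i T1 T2 a1 a2 \<le> 1"
  using policy_bounds[OF assms] unfolding bayes_pay_def Let_def by auto

lemma bayes_pay_available:
  "a1 \<in> opt T1 \<Longrightarrow> a2 \<in> opt T2 \<Longrightarrow> bayes_pay M i T1 T2 a1 a2 = M i a1 a2"
  unfolding bayes_pay_def by simp

lemma bayes_pay_transpose:
  "bayes_pay M 2 T1 T2 a1 a2 = bayes_pay (transpose_policy M) 1 T2 T1 a2 a1"
  unfolding bayes_pay_def Let_def transpose_policy_1 by auto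

lemma bayes_util_transpose:
  "bayes_util A S P T1 T2 M 2 s1 s2 = bayes_util A S P T2 T1 (transpose_policy M) 1 s2 s1"
proof -
  have "(\<Sum>a1\<in>opt A. \<Sum>a2\<in>opt A. s1 (T1 s) a1 * s2 (T2 s) a2 * q a2 a1)
      = (\<Sum>a2\<in>opt A. \<Sum>a1\<in>opt A. s2 (T2 s) a2 * s1 (T1 s) a1 * q a2 a1)" for s and q :: "_ \<Rightarrow> _ \<Rightarrow> real"
    by (subst sum.swap) (simp add: mult_ac)
  then show ?thesis unfolding bayes_util_def bayes_pay_transpose by simp
qed

lemma bayes_v2_transpose: "bayes_v2 A S P T1 T2 M = bayes_v1 A S P T2 T1 (transpose_policy M)"
  unfolding bayes_v1_def bayes_v2_def bayes_util_transpose ..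

lemma double_sum_swap:
  fixes p :: "'a \<Rightarrow> 'b \<Rightarrow> real"
  shows "(\<Sum>a\<in>X. \<Sum>b\<in>Y. x a * y b * p a b) = (\<Sum>b\<in>Y. y b * (\<Sum>a\<in>X. x a * p a b))"
  by (subst sum.swap) (simp add: sum_distrib_left mult_ac)

lemma double_sum_nested:
  fixes p :: "'a \<Rightarrow> 'b \<Rightarrow> real"
  shows "(\<Sum>a\<in>X. \<Sum>b\<in>Y. x a * y b * p a b) = (\<Sum>a\<in>X. x a * (\<Sum>b\<in>Y. y b * p a b))"
  by (simp add: sum_distrib_left mult_ac)

lemma double_sum_bounds:
  fixes p :: "'a \<Rightarrow> 'b \<Rightarrow> real"
  assumes "mixed X x" "mixed Y y" "\<And>a b. a \<in> X \<Longrightarrow> b \<in> Y \<Longrightarrow> 0 \<le> p a b \<and> p a b \<le> 1"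
  shows "0 \<le> (\<Sum>a\<in>X. \<Sum>b\<in>Y. x a * y b * p a b) \<and> (\<Sum>a\<in>X. \<Sum>b\<in>Y. x a * y b * p a b) \<le> 1"
proof -
  have lower: "0 \<le> (\<Sum>b\<in>Y. y b * p a b)" and upper: "(\<Sum>b\<in>Y. y b * p a b) \<le> 1" if "a \<in> X" for a
    using assms(3)[OF that] by (simp_all add: mixed_sum_ge[OF assms(2)] mixed_sum_le[OF assms(2)])
  have "0 \<le> (\<Sum>a\<in>X. x a * (\<Sum>b\<in>Y. y b * p a b))"
    by (rule mixed_sum_ge[OF assms(1)]) (rule lower)
  moreover have "(\<Sum>a\<in>X. x a * (\<Sum>b\<in>Y. y b * p a b)) \<le> 1"
    by (rule mixed_sum_le[OF assms(1)]) (rule upper)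
  ultimately show ?thesis unfolding double_sum_nested by blast
qed

lemma bstrat_mixed: "bstrat A s \<Longrightarrow> mixed (opt A) (s t)"
  unfolding bstrat_def by blast

lemma bstrat_nonempty:
  assumes "finite A"
  shows "Collect (bstrat A) \<noteq> {}"
proof -
  have "bstrat A (\<lambda>_ a. if a = None then 1 else 0)"
    unfolding bstrat_def using mixed_indicator[OF finite_opt[OF assms] None_in_opt] by simp
  then show ?thesis by blast
qed

lemma bayes_util_bounds:
  assumes "pmf_on S P" "policy (opt A) (opt A) M" "bstrat A s1" "bstrat A s2"
  shows "0 \<le> bayes_util A S P T1 T2 M 1 s1 s2 \<and> bayes_util A S P T1 T2 M 1 s1 s2 \<le> 1"
proof -
  let ?inner = "\<lambda>s. \<Sum>a1\<in>opt A. \<Sum>a2\<in>opt A. s1 (T1 s) a1 * s2 (T2 s) a2 * bayes_pay M 1 (T1 s) (T2 s) a1 a2"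
  have inner: "0 \<le> ?inner s \<and> ?inner s \<le> 1" for s
  proof (rule double_sum_bounds[OF bstrat_mixed[OF assms(3)] bstrat_mixed[OF assms(4)]])
    show "0 \<le> bayes_pay M 1 (T1 s) (T2 s) a1 a2 \<and> bayes_pay M 1 (T1 s) (T2 s) a1 a2 \<le> 1"
      if "a1 \<in> opt A" "a2 \<in> opt A" for a1 a2
      using bayes_pay_bounds[OF assms(2) that] by simp
  qed
  have P: "\<forall>s\<in>S. 0 \<le> P s" "sum P S = 1" using assms(1) unfolding pmf_on_def by auto
  have "(\<Sum>s\<in>S. P s * ?inner s) \<le> (\<Sum>s\<in>S. P s * 1)"
    using P inner by (intro sum_mono mult_left_mono) auto
  moreover have "0 \<le> (\<Sum>s\<in>S. P s * ?inner s)"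
    using P inner by (intro sum_nonneg) simp
  ultimately show ?thesis using P unfolding bayes_util_def by simp
qed

lemma scenario_payoff_ge:
  assumes "policy (opt A) (opt A) M" "mixed (opt A) x" "mixed (opt A) y"
    and guarantee: "t \<le> 1" "\<And>b. b \<in> opt A \<Longrightarrow> t \<le> (\<Sum>a\<in>opt A. x a * M 1 a b)"
    and support: "\<And>a. a \<in> opt A \<Longrightarrow> x a \<noteq> 0 \<Longrightarrow> a \<in> opt T1"
  shows "t \<le> (\<Sum>a1\<in>opt A. \<Sum>a2\<in>opt A. x a1 * y a2 * bayes_pay M 1 T1 T2 a1 a2)"
proof -
  have "t \<le> (\<Sum>a1\<in>opt A. x a1 * bayes_pay M 1 T1 T2 a1 a2)" if a2: "a2 \<in> opt A" for a2
  proof -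
    have "(\<Sum>a1\<in>opt A. x a1 * bayes_pay M 1 T1 T2 a1 a2)
        = (\<Sum>a1\<in>opt A. x a1 * (if a2 \<in> opt T2 then M 1 a1 a2 else 1))"
    proof (rule sum.cong[OF refl])
      fix a1 assume "a1 \<in> opt A"
      then show "x a1 * bayes_pay M 1 T1 T2 a1 a2 = x a1 * (if a2 \<in> opt T2 then M 1 a1 a2 else 1)"
        using support by (cases "x a1 = 0") (auto simp: bayes_pay_def)
    qed
    also have "t \<le> \<dots>"
      using guarantee a2 assms(2) by (cases "a2 \<in> opt T2") (auto simp: mixed_def)
    finally show ?thesis .
  qed
  then show ?thesis
    unfolding double_sum_swap by (simp add: mixed_sum_ge[OF assms(3)])
qed

lemma bayes_v1_ge_constant_strategy:
  assumes "finite A" "pmf_on S P" "policy (opt A) (opt A) M" "mixed (opt A) x"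
    and guarantee: "t \<le> 1" "\<And>b. b \<in> opt A \<Longrightarrow> t \<le> (\<Sum>a\<in>opt A. x a * M 1 a b)"
    and "S' \<subseteq> S" and support: "\<And>s a. s \<in> S' \<Longrightarrow> a \<in> opt A \<Longrightarrow> x a \<noteq> 0 \<Longrightarrow> a \<in> opt (T1 s)"
  shows "(\<Sum>s\<in>S'. P s) * t \<le> bayes_v1 A S P T1 T2 M"
  unfolding bayes_v1_def
proof (rule le_SUP_INF[of "\<lambda>_. x"])
  show "(\<lambda>_. x) \<in> Collect (bstrat A)" using assms(4) unfolding bstrat_def by simp
  show "Collect (bstrat A) \<noteq> {}" using assms(1) by (rule bstrat_nonempty)
  show "0 \<le> bayes_util A S P T1 T2 M 1 s1 s2 \<and> bayes_util A S P T1 T2 M 1 s1 s2 \<le> 1"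
    if "s1 \<in> Collect (bstrat A)" "s2 \<in> Collect (bstrat A)" for s1 s2
    using bayes_util_bounds[OF assms(2,3)] that by simp
  fix y assume "y \<in> Collect (bstrat A)"
  then have y: "mixed (opt A) (y t)" for t by (simp add: bstrat_mixed)
  have P: "\<forall>s\<in>S. 0 \<le> P s" using assms(2) unfolding pmf_on_def by blast
  have inner: "(if s \<in> S' then t else 0) \<le> (\<Sum>a1\<in>opt A. \<Sum>a2\<in>opt A. x a1 * y (T2 s) a2 * bayes_pay M 1 (T1 s) (T2 s) a1 a2)"
    for s
    using scenario_payoff_ge[OF assms(3,4) y guarantee support]
      double_sum_bounds[OF assms(4) y] bayes_pay_bounds[OF assms(3)] by simp
  have "(\<Sum>s\<in>S'. P s) * t = (\<Sum>s\<in>S \<inter> S'. P s * t)"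
    using assms(7) by (simp add: sum_distrib_right Int_absorb1)
  also have "\<dots> = (\<Sum>s\<in>S. P s * (if s \<in> S' then t else 0))"
    using pmf_on_finite[OF assms(2)] by (simp add: sum.inter_restrict if_distrib[of "(*) _"] cong: if_cong)
  also have "\<dots> \<le> bayes_util A S P T1 T2 M 1 (\<lambda>_. x) y"
    unfolding bayes_util_def using P inner by (intro sum_mono mult_left_mono) auto
  finally show "(\<Sum>s\<in>S'. P s) * t \<le> bayes_util A S P T1 T2 M 1 (\<lambda>_. x) y" .
qed

lemma bayes_v1_le_fixed_reply:
  assumes "finite A" "pmf_on S P" "policy (opt A) (opt A) M" "bstrat A y"
    and reply: "\<And>s a. s \<in> S \<Longrightarrow> a \<in> opt A \<Longrightarrow> (\<Sum>b\<in>opt A. y (T2 s) b * bayes_pay M 1 (T1 s) (T2 s) a b) \<le> c s"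
  shows "bayes_v1 A S P T1 T2 M \<le> (\<Sum>s\<in>S. P s * c s)"
  unfolding bayes_v1_def
proof (rule SUP_INF_le)
  show "Collect (bstrat A) \<noteq> {}" using assms(1) by (rule bstrat_nonempty)
  show "0 \<le> bayes_util A S P T1 T2 M 1 s1 s2" if "s1 \<in> Collect (bstrat A)" "s2 \<in> Collect (bstrat A)" for s1 s2
    using bayes_util_bounds[OF assms(2,3)] that by simp
  fix x assume "x \<in> Collect (bstrat A)"
  then have x: "mixed (opt A) (x t)" for t by (simp add: bstrat_mixed)
  have P: "\<forall>s\<in>S. 0 \<le> P s" using assms(2) unfolding pmf_on_def by blast
  have "bayes_util A S P T1 T2 M 1 x y \<le> (\<Sum>s\<in>S. P s * c s)"
    unfolding bayes_util_def double_sum_nested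
    using P reply by (intro sum_mono mult_left_mono mixed_sum_le[OF x]) auto
  then show "\<exists>y'\<in>Collect (bstrat A). bayes_util A S P T1 T2 M 1 x y' \<le> (\<Sum>s\<in>S. P s * c s)"
    using assms(4) by blast
qed

lemma bstrat_pure_strat: "finite A \<Longrightarrow> \<forall>t. f t \<in> opt A \<Longrightarrow> bstrat A (pure_strat f)"
  unfolding bstrat_def pure_strat_def by (simp add: mixed_indicator finite_opt)

lemma bayes_util_pure:
  assumes "finite A" "\<forall>t. f1 t \<in> opt A" "\<forall>t. f2 t \<in> opt A"
  shows "bayes_util A S P T1 T2 M i (pure_strat f1) (pure_strat f2)
     = (\<Sum>s\<in>S. P s * bayes_pay M i (T1 s) (T2 s) (f1 (T1 s)) (f2 (T2 s)))"
proof -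
  have "(\<Sum>a1\<in>opt A. \<Sum>a2\<in>opt A. pure_strat f1 t1 a1 * pure_strat f2 t2 a2 * bayes_pay M i t1 t2 a1 a2)
      = bayes_pay M i t1 t2 (f1 t1) (f2 t2)" for t1 t2
    unfolding double_sum_nested pure_strat_def
    using assms by (simp add: sum_indicator_mult finite_opt)
  then show ?thesis unfolding bayes_util_def by simp
qed

lemma bayes_pure_eq_intro:
  assumes "finite A" "\<forall>s\<in>S. 0 \<le> P s" and f1: "\<forall>t. f1 t \<in> opt A" and f2: "\<forall>t. f2 t \<in> opt A"
    and best1: "\<And>s a. s \<in> S \<Longrightarrow> a \<in> opt A \<Longrightarrow>
      bayes_pay M 1 (T1 s) (T2 s) a (f2 (T2 s)) \<le> bayes_pay M 1 (T1 s) (T2 s) (f1 (T1 s)) (f2 (T2 s))"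
    and best2: "\<And>s b. s \<in> S \<Longrightarrow> b \<in> opt A \<Longrightarrow>
      bayes_pay M 2 (T1 s) (T2 s) (f1 (T1 s)) b \<le> bayes_pay M 2 (T1 s) (T2 s) (f1 (T1 s)) (f2 (T2 s))"
  shows "bayes_pure_eq A S P T1 T2 M"
  unfolding bayes_pure_eq_def
proof (intro exI conjI allI impI)
  fix g1 :: "'a set \<Rightarrow> 'a option" assume g1: "\<forall>t. g1 t \<in> opt A"
  show "bayes_util A S P T1 T2 M 1 (pure_strat g1) (pure_strat f2) \<le> bayes_util A S P T1 T2 M 1 (pure_strat f1) (pure_strat f2)"
    unfolding bayes_util_pure[OF assms(1) g1 f2] bayes_util_pure[OF assms(1) f1 f2]
    using assms(2) g1 best1 by (intro sum_mono mult_left_mono) auto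
next
  fix g2 :: "'a set \<Rightarrow> 'a option" assume g2: "\<forall>t. g2 t \<in> opt A"
  show "bayes_util A S P T1 T2 M 2 (pure_strat f1) (pure_strat g2) \<le> bayes_util A S P T1 T2 M 2 (pure_strat f1) (pure_strat f2)"
    unfolding bayes_util_pure[OF assms(1) f1 g2] bayes_util_pure[OF assms(1) f1 f2]
    using assms(2) g2 best2 by (intro sum_mono mult_left_mono) auto
qed (use f1 f2 in auto)

lemma bayes_pure_eq_deviation:
  assumes "finite A" "finite S" "s' \<in> S" "0 < P s'" "\<And>s. s \<in> S \<Longrightarrow> T1 s = T1 s' \<Longrightarrow> s = s'"
    and f1: "\<forall>t. f1 t \<in> opt A" and f2: "\<forall>t. f2 t \<in> opt A"
    and best: "\<forall>g1. (\<forall>t. g1 t \<in> opt A) \<longrightarrow>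
      bayes_util A S P T1 T2 M 1 (pure_strat g1) (pure_strat f2) \<le> bayes_util A S P T1 T2 M 1 (pure_strat f1) (pure_strat f2)"
    and "a \<in> opt A"
  shows "bayes_pay M 1 (T1 s') (T2 s') a (f2 (T2 s')) \<le> bayes_pay M 1 (T1 s') (T2 s') (f1 (T1 s')) (f2 (T2 s'))"
proof -
  let ?g1 = "f1(T1 s' := a)"
  let ?F = "\<lambda>g s. P s * bayes_pay M 1 (T1 s) (T2 s) (g (T1 s)) (f2 (T2 s))"
  have g1: "\<forall>t. ?g1 t \<in> opt A" using f1 \<open>a \<in> opt A\<close> by simp
  have "bayes_util A S P T1 T2 M 1 (pure_strat ?g1) (pure_strat f2) \<le> bayes_util A S P T1 T2 M 1 (pure_strat f1) (pure_strat f2)"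
    using mp[OF spec[OF best, of ?g1] g1] .
  then have "(\<Sum>s\<in>S. ?F ?g1 s) \<le> (\<Sum>s\<in>S. ?F f1 s)"
    unfolding bayes_util_pure[OF assms(1) g1 f2] bayes_util_pure[OF assms(1) f1 f2] .
  moreover have "?F ?g1 s = ?F f1 s" if "s \<in> S - {s'}" for s
    using assms(5)[of s] that by auto
  then have "(\<Sum>s\<in>S - {s'}. ?F ?g1 s) = (\<Sum>s\<in>S - {s'}. ?F f1 s)"
    by (rule sum.cong[OF refl])
  ultimately have "?F ?g1 s' \<le> ?F f1 s'"
    unfolding sum.remove[OF assms(2,3), of "?F ?g1"] sum.remove[OF assms(2,3), of "?F f1"] by linarith
  then show ?thesis using assms(4) by (simp add: mult_le_cancel_left_pos)
qed

lemma bayes_pure_eq_scenario_equilibrium: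
  assumes "finite A" "finite S" "s' \<in> S" "0 < P s'"
    and "\<And>s. s \<in> S \<Longrightarrow> T1 s = T1 s' \<Longrightarrow> s = s'" "\<And>s. s \<in> S \<Longrightarrow> T2 s = T2 s' \<Longrightarrow> s = s'"
    and "bayes_pure_eq A S P T1 T2 M"
  obtains a b where "a \<in> opt A" "b \<in> opt A"
    "\<And>a'. a' \<in> opt A \<Longrightarrow> bayes_pay M 1 (T1 s') (T2 s') a' b \<le> bayes_pay M 1 (T1 s') (T2 s') a b"
    "\<And>b'. b' \<in> opt A \<Longrightarrow> bayes_pay M 2 (T1 s') (T2 s') a b' \<le> bayes_pay M 2 (T1 s') (T2 s') a b"
proof -
  obtain f1 f2 where f1: "\<forall>t. f1 t \<in> opt A" and f2: "\<forall>t. f2 t \<in> opt A"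
    and best1: "\<forall>g1. (\<forall>t. g1 t \<in> opt A) \<longrightarrow>
      bayes_util A S P T1 T2 M 1 (pure_strat g1) (pure_strat f2) \<le> bayes_util A S P T1 T2 M 1 (pure_strat f1) (pure_strat f2)"
    and best2: "\<forall>g2. (\<forall>t. g2 t \<in> opt A) \<longrightarrow>
      bayes_util A S P T2 T1 (transpose_policy M) 1 (pure_strat g2) (pure_strat f1)
        \<le> bayes_util A S P T2 T1 (transpose_policy M) 1 (pure_strat f2) (pure_strat f1)"
    using assms(7) unfolding bayes_pure_eq_def bayes_util_transpose by blast
  show ?thesis
  proof (rule that[of "f1 (T1 s')" "f2 (T2 s')"])
    show "f1 (T1 s') \<in> opt A" "f2 (T2 s') \<in> opt A" using f1 f2 by auto
    show "bayes_pay M 1 (T1 s') (T2 s') a' (f2 (T2 s')) \<le> bayes_pay M 1 (T1 s') (T2 s') (f1 (T1 s')) (f2 (T2 s'))"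
      if "a' \<in> opt A" for a'
      using bayes_pure_eq_deviation[OF assms(1-5) f1 f2 best1 that] .
    show "bayes_pay M 2 (T1 s') (T2 s') (f1 (T1 s')) b' \<le> bayes_pay M 2 (T1 s') (T2 s') (f1 (T1 s')) (f2 (T2 s'))"
      if "b' \<in> opt A" for b'
      using bayes_pure_eq_deviation[OF assms(1-4,6) f2 f1 best2 that]
      unfolding bayes_pay_transpose .
  qed
qed

section \<open>The examples\<close>

abbreviation Act :: "nat set" where
  "Act \<equiv> {1, 2, 3}"

definition scenarios :: "nat set" where
  "scenarios = {0, 1, 2, 3}"

definition Cw :: "nat \<Rightarrow> nat set" where
  "Cw s = (if s = 0 then Act else Act - {s})"

definition Cl :: "nat \<Rightarrow> nat set" where
  "Cl s = (if s = 0 then Act else {s})"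

text \<open>Scenario 0 has probability zero, but its game must still have a pure equilibrium.\<close>

definition P_common :: "nat \<Rightarrow> real" where
  "P_common s = (if s = 0 then 0 else 1 / 3)"

definition P_private :: "nat \<Rightarrow> real" where
  "P_private s = 1 / 4"

definition zero_sum_policy :: "('a \<Rightarrow> 'b \<Rightarrow> real) \<Rightarrow> nat \<Rightarrow> 'a \<Rightarrow> 'b \<Rightarrow> real" where
  "zero_sum_policy m i a b = (if i = 1 then m a b else 1 - m a b)"

definition rps :: "nat option \<Rightarrow> nat option \<Rightarrow> real" where
  "rps a b = (case (a, b) of
      (None, _) \<Rightarrow> 0
    | (Some _, None) \<Rightarrow> 1
    | (Some i, Some j) \<Rightarrow> if i = j then 1 / 2 else if i = j mod 3 + 1 then 1 else 0)"

definition biased :: "nat option \<Rightarrow> nat option \<Rightarrow> real" where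
  "biased a b = (case (a, b) of
      (None, _) \<Rightarrow> 0
    | (Some _, None) \<Rightarrow> 1
    | (Some i, Some j) \<Rightarrow> if (i, j) \<in> {(2, 3), (3, 1)} then 0 else 1)"

lemma policy_zero_sum_policy:
  "(\<And>a b. 0 \<le> m a b \<and> m a b \<le> 1) \<Longrightarrow> policy X Y (zero_sum_policy m)"
  unfolding policy_def zero_sum_policy_def by auto

lemma policy_rps: "policy X Y (zero_sum_policy rps)"
  by (rule policy_zero_sum_policy) (auto simp: rps_def split: option.split)

lemma policy_biased: "policy X Y (zero_sum_policy biased)"
  by (rule policy_zero_sum_policy) (auto simp: biased_def split: option.split)

lemma opt_Act: "opt Act = {None, Some 1, Some 2, Some 3}"
  unfolding opt_def by auto

lemma opt_Act_cover: "a \<in> opt Act \<Longrightarrow> \<exists>k\<in>Act. a \<in> opt {k}"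
  unfolding opt_def by auto

lemma ckddg_example: "pmf_on scenarios P \<Longrightarrow> ckddg Act scenarios P Cw Cl"
  unfolding ckddg_def scenarios_def Cw_def Cl_def by auto

lemma pmf_on_P_common: "pmf_on scenarios P_common"
  unfolding pmf_on_def scenarios_def P_common_def by simp

lemma pmf_on_P_private: "pmf_on scenarios P_private"
  unfolding pmf_on_def scenarios_def P_private_def by simp

definition single_action_value :: "nat \<Rightarrow> (nat \<Rightarrow> nat option \<Rightarrow> nat option \<Rightarrow> real) \<Rightarrow> real" where
  "single_action_value k M = maxmin (opt {k}) (opt (Act - {k})) (M 1)"

lemma ckddg_error_example:
  "ckddg_error scenarios P_common Cw Cl M
     = (\<Sum>k\<in>Act. single_action_value k M + single_action_value k (transpose_policy M)) / 6"
proof -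
  have "ind_S scenarios = {(1, 0), (1, 1), (1, 2), (1, 3), (2, 0), (2, 1), (2, 2), (2, 3)}"
    unfolding ind_S_def scenarios_def by auto
  then show ?thesis
    unfolding ckddg_error_def ckdg_error_def ckdg_w2_eq_w1_transpose ckdg_w1_eq_maxmin single_action_value_def
    by (simp add: ind_P_def ind_C_def ind_u_def Cw_def Cl_def P_common_def)
qed

lemma single_action_payoff_bounds:
  assumes "policy (opt Act) (opt Act) M" "k \<in> Act" "a \<in> opt {k}" "b \<in> opt (Act - {k})"
  shows "0 \<le> M 1 a b \<and> M 1 a b \<le> 1"
  using assms(3,4) opt_mono[of "{k}" Act] opt_mono[of "Act - {k}" Act] assms(2)
  by (intro policy_bounds[OF assms(1)]) auto

lemma single_action_value_nonneg:
  assumes "policy (opt Act) (opt Act) M" "k \<in> Act"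
  shows "0 \<le> single_action_value k M"
  unfolding single_action_value_def
proof (rule maxmin_ge[OF _ opt_nonempty _ None_in_opt])
  show "0 \<le> M 1 a b \<and> M 1 a b \<le> 1" if "a \<in> opt {k}" "b \<in> opt (Act - {k})" for a b
    using single_action_payoff_bounds[OF assms that] .
  show "0 \<le> M 1 None b" if "b \<in> opt (Act - {k})" for b
    using single_action_payoff_bounds[OF assms None_in_opt that] by blast
qed simp

lemma single_action_value_le:
  assumes "policy (opt Act) (opt Act) M" "k \<in> Act" "b \<in> opt (Act - {k})"
    and "\<And>a. a \<in> opt {k} \<Longrightarrow> M 1 a b \<le> c"
  shows "single_action_value k M \<le> c"
  unfolding single_action_value_def
  using single_action_payoff_bounds[OF assms(1,2)] assms(3,4)
  by (intro maxmin_le[OF _ opt_nonempty]) auto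

lemma single_action_value_ge_equilibrium:
  assumes "policy (opt Act) (opt Act) M" "a \<in> opt Act" "b \<in> opt Act"
    and "\<forall>b'\<in>opt Act. M 2 a b' \<le> M 2 a b"
  obtains k where "k \<in> Act" "M 1 a b \<le> single_action_value k M"
proof -
  obtain k where k: "k \<in> Act" "a \<in> opt {k}" using opt_Act_cover[OF assms(2)] by blast
  have "M 1 a b \<le> single_action_value k M"
    unfolding single_action_value_def
    using k assms(1,3,4) opt_mono[of "{k}" Act] opt_mono[of "Act - {k}" Act] opt_nonempty
    by (intro equilibrium_payoff_le_maxmin) auto
  with k(1) show ?thesis by (rule that)
qed

lemma single_action_values_rps:
  assumes "k \<in> Act"
  shows "single_action_value k (zero_sum_policy rps) \<le> 0"
    and "single_action_value k (transpose_policy (zero_sum_policy rps)) \<le> 0"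
  using assms
  by (auto intro!: single_action_value_le[where b = "Some (k mod 3 + 1)"] policy_rps policy_transpose
      simp: opt_def rps_def zero_sum_policy_def transpose_policy_def)

lemma single_action_values_biased:
  shows "single_action_value 1 (zero_sum_policy biased) \<le> 1"
    and "single_action_value 2 (zero_sum_policy biased) \<le> 0"
    and "single_action_value 3 (zero_sum_policy biased) \<le> 0"
    and "k \<in> Act \<Longrightarrow> single_action_value k (transpose_policy (zero_sum_policy biased)) \<le> 0"
proof -
  note defs = opt_def zero_sum_policy_def biased_def transpose_policy_def
  show "single_action_value 1 (zero_sum_policy biased) \<le> 1"
    by (rule single_action_value_le[where b = None]) (auto simp: policy_biased defs split: option.split)
  show "single_action_value 2 (zero_sum_policy biased) \<le> 0"
    by (rule single_action_value_le[where b = "Some 3"]) (auto simp: policy_biased defs)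
  show "single_action_value 3 (zero_sum_policy biased) \<le> 0"
    by (rule single_action_value_le[where b = "Some 1"]) (auto simp: policy_biased defs)
  show "single_action_value k (transpose_policy (zero_sum_policy biased)) \<le> 0" if "k \<in> Act"
    using that
    by (intro single_action_value_le[where b = "Some (if k = 1 then 2 else 1)"])
      (auto simp: policy_biased policy_transpose defs)
qed

lemma ckddg_error_example_nonneg:
  assumes "policy (opt Act) (opt Act) M"
  shows "0 \<le> ckddg_error scenarios P_common Cw Cl M"
  unfolding ckddg_error_example
  using single_action_value_nonneg[OF assms] single_action_value_nonneg[OF policy_transpose[OF assms]]
  by (simp add: sum_nonneg add_nonneg_nonneg)

lemma ckddg_error_example_pure:
  assumes "policy (opt Act) (opt Act) M" "ckddg_pure scenarios Cw Cl M"
  shows "1 / 6 \<le> ckddg_error scenarios P_common Cw Cl M"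
proof -
  let ?V = "\<lambda>k. single_action_value k M" and ?W = "\<lambda>k. single_action_value k (transpose_policy M)"
  have "ckdg_pure_eq_at (ind_C 1 Cw Cl) (ind_C 2 Cw Cl) M (1, 0)"
    using assms(2) unfolding ckddg_pure_def ckdg_pure_def ind_S_def scenarios_def by simp
  then obtain a b where ab: "a \<in> opt Act" "b \<in> opt Act"
    and best1: "\<forall>a'\<in>opt Act. M 1 a' b \<le> M 1 a b" and best2: "\<forall>b'\<in>opt Act. M 2 a b' \<le> M 2 a b"
    unfolding ckdg_pure_eq_at_def by (auto simp: ind_C_def Cw_def Cl_def)
  obtain k where k: "k \<in> Act" "M 1 a b \<le> ?V k"
    using single_action_value_ge_equilibrium[OF assms(1) ab best2] .
  obtain k' where k': "k' \<in> Act" "M 2 a b \<le> ?W k'"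
    using single_action_value_ge_equilibrium[OF policy_transpose[OF assms(1)] ab(2,1)] best1
    unfolding transpose_policy_1 transpose_policy_2 by blast
  have "?V k \<le> sum ?V Act"
    using single_action_value_nonneg[OF assms(1)] by (intro member_le_sum[OF k(1)]) auto
  moreover have "?W k' \<le> sum ?W Act"
    using single_action_value_nonneg[OF policy_transpose[OF assms(1)]] by (intro member_le_sum[OF k'(1)]) auto
  moreover have "M 1 a b + M 2 a b = 1"
    using policy_agent2[OF assms(1) ab] by simp
  ultimately have "1 \<le> sum ?V Act + sum ?W Act"
    using k(2) k'(2) by linarith
  then show ?thesis
    unfolding ckddg_error_example sum.distrib by simp
qed

lemma ckddg_pure_biased: "ckddg_pure scenarios Cw Cl (zero_sum_policy biased)"
  unfolding ckddg_pure_def ckdg_pure_def ckdg_pure_eq_at_def ind_S_def scenarios_def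
  by (auto simp: ind_C_def Cw_def Cl_def opt_def zero_sum_policy_def biased_def)

lemma ckddg_example_gap:
  "strict_min_gap (policy (opt Act) (opt Act)) (ckddg_pure scenarios Cw Cl) (ckddg_error scenarios P_common Cw Cl)"
proof (rule strict_min_gap_intro[where e_opt = 0 and e_pure = "1 / 6"])
  show "policy (opt Act) (opt Act) (zero_sum_policy rps)" by (rule policy_rps)
  show "ckddg_error scenarios P_common Cw Cl (zero_sum_policy rps) \<le> 0"
    unfolding ckddg_error_example using single_action_values_rps by (simp add: sum_nonpos add_nonpos_nonpos)
  show "policy (opt Act) (opt Act) (zero_sum_policy biased)" by (rule policy_biased)
  show "ckddg_pure scenarios Cw Cl (zero_sum_policy biased)" by (rule ckddg_pure_biased)
  show "ckddg_error scenarios P_common Cw Cl (zero_sum_policy biased) \<le> 1 / 6"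
    unfolding ckddg_error_example
    using single_action_values_biased(1-3) single_action_values_biased(4)[of 1]
      single_action_values_biased(4)[of 2] single_action_values_biased(4)[of 3]
    by simp
  show "0 \<le> ckddg_error scenarios P_common Cw Cl M" if "policy (opt Act) (opt Act) M" for M
    using that by (rule ckddg_error_example_nonneg)
  show "1 / 6 \<le> ckddg_error scenarios P_common Cw Cl M"
    if "policy (opt Act) (opt Act) M" "ckddg_pure scenarios Cw Cl M" for M
    using that by (rule ckddg_error_example_pure)
qed simp

lemma piddg_error_example:
  "piddg_error Act scenarios P_private Cw Cl M
     = (bayes_v1 Act scenarios P_private Cl Cw M + bayes_v1 Act scenarios P_private Cl Cw (transpose_policy M)) / 2"
  unfolding piddg_error_def bayes_v2_transpose ..

lemma maxmin_le_private_value: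
  assumes "policy (opt Act) (opt Act) M"
  shows "maxmin (opt Act) (opt Act) (M 1) \<le> 4 * bayes_v1 Act scenarios P_private Cl Cw M"
proof (rule maxmin_le_guarantee)
  show "0 \<le> M 1 a b" if "a \<in> opt Act" "b \<in> opt Act" for a b
    using policy_bounds[OF assms that] by simp
  fix x t assume x: "mixed (opt Act) x" and guarantee: "\<And>b. b \<in> opt Act \<Longrightarrow> t \<le> (\<Sum>a\<in>opt Act. x a * M 1 a b)"
  have "(\<Sum>a\<in>opt Act. x a * M 1 a None) \<le> 1"
    using x by (rule mixed_sum_le) (use policy_bounds[OF assms _ None_in_opt] in simp)
  then have "t \<le> 1" using guarantee[OF None_in_opt] by linarith
  have "(\<Sum>s\<in>{0}. P_private s) * t \<le> bayes_v1 Act scenarios P_private Cl Cw M"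
    by (rule bayes_v1_ge_constant_strategy[OF _ pmf_on_P_private assms x \<open>t \<le> 1\<close> guarantee])
      (auto simp: scenarios_def Cl_def)
  then show "t \<le> 4 * bayes_v1 Act scenarios P_private Cl Cw M"
    by (simp add: P_private_def)
qed (simp_all add: opt_nonempty)

lemma equilibrium_payoff_le_private_value:
  assumes "policy (opt Act) (opt Act) M" "a \<in> opt Act" "b \<in> opt Act"
    and best_reply: "\<forall>b'\<in>opt Act. M 1 a b \<le> M 1 a b'"
  shows "M 1 a b \<le> 2 * bayes_v1 Act scenarios P_private Cl Cw M"
proof -
  obtain k where k: "k \<in> Act" "a \<in> opt {k}" using opt_Act_cover[OF assms(2)] by blast
  have "(\<Sum>s\<in>{0, k}. P_private s) * M 1 a b \<le> bayes_v1 Act scenarios P_private Cl Cw M"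
  proof (rule bayes_v1_ge_constant_strategy[OF _ pmf_on_P_private assms(1) mixed_indicator[OF _ assms(2)]])
    show "M 1 a b \<le> 1" using policy_bounds[OF assms(1-3)] by simp
    show "M 1 a b \<le> (\<Sum>a'\<in>opt Act. (if a' = a then 1 else 0) * M 1 a' b')" if "b' \<in> opt Act" for b'
    proof -
      have fin: "finite (opt Act)" by simp
      show ?thesis unfolding sum_indicator_mult[OF fin assms(2)] using best_reply that by simp
    qed
    show "a' \<in> opt (Cl s)" if "s \<in> {0, k}" "(if a' = a then 1 else 0) \<noteq> (0::real)" for s a'
      using that k by (auto simp: Cl_def opt_def split: if_splits)
  qed (use k in \<open>auto simp: scenarios_def\<close>)
  then show ?thesis using k(1) by (auto simp: P_private_def)
qed

lemma piddg_error_example_lower: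
  assumes "policy (opt Act) (opt Act) M"
  shows "1 / 8 \<le> piddg_error Act scenarios P_private Cw Cl M"
proof -
  have "1 \<le> maxmin (opt Act) (opt Act) (M 1) + maxmin (opt Act) (opt Act) (\<lambda>b a. 1 - M 1 a b)"
    using policy_bounds[OF assms] by (intro maxmin_add_maxmin_complement) (simp_all add: opt_nonempty)
  moreover have "maxmin (opt Act) (opt Act) (\<lambda>b a. 1 - M 1 a b) = maxmin (opt Act) (opt Act) (transpose_policy M 1)"
    using policy_agent2[OF assms] by (intro maxmin_cong) (simp add: transpose_policy_def)
  ultimately show ?thesis
    unfolding piddg_error_example
    using maxmin_le_private_value[OF assms] maxmin_le_private_value[OF policy_transpose[OF assms]] by simp
qed

lemma piddg_error_example_pure:
  assumes "policy (opt Act) (opt Act) M" "piddg_pure Act scenarios P_private Cw Cl M"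
  shows "1 / 4 \<le> piddg_error Act scenarios P_private Cw Cl M"
proof -
  have unique: "s = 0" if "s \<in> scenarios" "Cw s = Cw 0 \<or> Cl s = Cl 0" for s
  proof (rule ccontr)
    assume "s \<noteq> 0"
    then have "s \<in> Cw 0 - Cw s" "card (Cl s) = 1" "card (Cl 0) = 3"
      using that(1) by (auto simp: scenarios_def Cw_def Cl_def)
    then show False using that(2) by auto
  qed
  have "bayes_pure_eq Act scenarios P_private Cw Cl M"
    using assms(2) unfolding piddg_pure_def by blast
  from bayes_pure_eq_scenario_equilibrium[of Act scenarios 0 P_private Cw Cl, OF _ _ _ _ unique unique this]
  obtain a b where ab: "a \<in> opt Act" "b \<in> opt Act"
    and best1: "\<And>a'. a' \<in> opt Act \<Longrightarrow> bayes_pay M 1 (Cw 0) (Cl 0) a' b \<le> bayes_pay M 1 (Cw 0) (Cl 0) a b"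
    and best2: "\<And>b'. b' \<in> opt Act \<Longrightarrow> bayes_pay M 2 (Cw 0) (Cl 0) a b' \<le> bayes_pay M 2 (Cw 0) (Cl 0) a b"
    by (auto simp: scenarios_def P_private_def)
  have "Cw 0 = Act" "Cl 0 = Act" by (simp_all add: Cw_def Cl_def)
  then have best1: "\<forall>a'\<in>opt Act. M 1 a' b \<le> M 1 a b" and best2: "\<forall>b'\<in>opt Act. M 2 a b' \<le> M 2 a b"
    using best1 best2 ab by (simp_all add: bayes_pay_available)
  have "M 1 a b \<le> 2 * bayes_v1 Act scenarios P_private Cl Cw M"
    using best2 policy_agent2[OF assms(1)] ab
    by (intro equilibrium_payoff_le_private_value[OF assms(1) ab]) fastforce
  moreover have "M 2 a b \<le> 2 * bayes_v1 Act scenarios P_private Cl Cw (transpose_policy M)"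
    using equilibrium_payoff_le_private_value[OF policy_transpose[OF assms(1)] ab(2,1)]
      best1 policy_agent2[OF assms(1)] ab
    unfolding transpose_policy_1 by fastforce
  moreover have "M 1 a b + M 2 a b = 1" using policy_agent2[OF assms(1) ab] by simp
  ultimately have "1 / 2 \<le> bayes_v1 Act scenarios P_private Cl Cw M + bayes_v1 Act scenarios P_private Cl Cw (transpose_policy M)"
    by linarith
  then show ?thesis unfolding piddg_error_example by simp
qed

definition rps_reply :: "nat set \<Rightarrow> nat option \<Rightarrow> real" where
  "rps_reply T b =
     (if 1 \<notin> T then of_bool (b = Some 2)
      else if 2 \<notin> T then of_bool (b = Some 3)
      else if 3 \<notin> T then of_bool (b = Some 1)
      else if b \<in> Some ` Act then 1 / 3 else 0)"

definition biased_strategy1 :: "nat set \<Rightarrow> nat option" where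
  "biased_strategy1 T = (if 1 \<in> T then Some 1 else Some 2)"

definition biased_strategy2 :: "nat set \<Rightarrow> nat option" where
  "biased_strategy2 T = (if 2 \<notin> T then Some 3 else if 3 \<notin> T then Some 1 else None)"

lemma bstrat_rps_reply: "bstrat Act rps_reply"
  unfolding bstrat_def mixed_def opt_Act rps_reply_def by auto

lemma biased_strategies_opt: "\<forall>T. biased_strategy1 T \<in> opt Act" "\<forall>T. biased_strategy2 T \<in> opt Act"
  unfolding biased_strategy1_def biased_strategy2_def opt_Act by auto

lemma sum_scenarios_P_private: "(\<Sum>s\<in>scenarios. P_private s * c s) = (c 0 + c 1 + c 2 + c 3) / 4"
  unfolding scenarios_def P_private_def by simp

lemma private_values_rps:
  shows "bayes_v1 Act scenarios P_private Cl Cw (zero_sum_policy rps) \<le> 1 / 8"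
    and "bayes_v1 Act scenarios P_private Cl Cw (transpose_policy (zero_sum_policy rps)) \<le> 1 / 8"
proof -
  note defs = scenarios_def opt_Act Cl_def Cw_def rps_reply_def bayes_pay_def opt_def Let_def
    zero_sum_policy_def transpose_policy_def rps_def
  have "bayes_v1 Act scenarios P_private Cl Cw (zero_sum_policy rps) \<le> (\<Sum>s\<in>scenarios. P_private s * (if s = 0 then 1 / 2 else 0))"
    by (rule bayes_v1_le_fixed_reply[OF _ pmf_on_P_private policy_rps bstrat_rps_reply]) (auto simp: defs)
  then show "bayes_v1 Act scenarios P_private Cl Cw (zero_sum_policy rps) \<le> 1 / 8"
    unfolding sum_scenarios_P_private by simp
  have "bayes_v1 Act scenarios P_private Cl Cw (transpose_policy (zero_sum_policy rps)) \<le> (\<Sum>s\<in>scenarios. P_private s * (if s = 0 then 1 / 2 else 0))"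
    by (rule bayes_v1_le_fixed_reply[OF _ pmf_on_P_private policy_transpose[OF policy_rps] bstrat_rps_reply])
      (auto simp: defs)
  then show "bayes_v1 Act scenarios P_private Cl Cw (transpose_policy (zero_sum_policy rps)) \<le> 1 / 8"
    unfolding sum_scenarios_P_private by simp
qed

lemma private_values_biased:
  shows "bayes_v1 Act scenarios P_private Cl Cw (zero_sum_policy biased) \<le> 1 / 2"
    and "bayes_v1 Act scenarios P_private Cl Cw (transpose_policy (zero_sum_policy biased)) \<le> 0"
proof -
  note defs = scenarios_def opt_Act Cl_def Cw_def pure_strat_def biased_strategy1_def biased_strategy2_def
    bayes_pay_def opt_def Let_def zero_sum_policy_def transpose_policy_def biased_def
  have "bayes_v1 Act scenarios P_private Cl Cw (zero_sum_policy biased) \<le> (\<Sum>s\<in>scenarios. P_private s * (if s \<le> 1 then 1 else 0))"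
    by (rule bayes_v1_le_fixed_reply[OF _ pmf_on_P_private policy_biased bstrat_pure_strat[OF _ biased_strategies_opt(2)]])
      (auto simp: defs)
  then show "bayes_v1 Act scenarios P_private Cl Cw (zero_sum_policy biased) \<le> 1 / 2"
    unfolding sum_scenarios_P_private by simp
  have "bayes_v1 Act scenarios P_private Cl Cw (transpose_policy (zero_sum_policy biased)) \<le> (\<Sum>s\<in>scenarios. P_private s * 0)"
    by (rule bayes_v1_le_fixed_reply[OF _ pmf_on_P_private policy_transpose[OF policy_biased]
          bstrat_pure_strat[OF _ biased_strategies_opt(1)]])
      (auto simp: defs)
  then show "bayes_v1 Act scenarios P_private Cl Cw (transpose_policy (zero_sum_policy biased)) \<le> 0"
    by simp
qed

lemma piddg_pure_biased: "piddg_pure Act scenarios P_private Cw Cl (zero_sum_policy biased)"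
  unfolding piddg_pure_def
proof
  note defs = scenarios_def P_private_def opt_Act Cl_def Cw_def biased_strategy1_def biased_strategy2_def
    bayes_pay_def opt_def Let_def zero_sum_policy_def biased_def
  show "bayes_pure_eq Act scenarios P_private Cw Cl (zero_sum_policy biased)"
    by (rule bayes_pure_eq_intro[of Act scenarios P_private biased_strategy1 "\<lambda>_. None"])
      (auto simp: biased_strategies_opt None_in_opt defs)
  show "bayes_pure_eq Act scenarios P_private Cl Cw (zero_sum_policy biased)"
    by (rule bayes_pure_eq_intro[of Act scenarios P_private "\<lambda>_. Some 1" biased_strategy2])
      (auto simp: biased_strategies_opt defs)
qed

lemma piddg_example_gap:
  "strict_min_gap (policy (opt Act) (opt Act)) (piddg_pure Act scenarios P_private Cw Cl)
     (piddg_error Act scenarios P_private Cw Cl)"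
proof (rule strict_min_gap_intro[where e_opt = "1 / 8" and e_pure = "1 / 4"])
  show "policy (opt Act) (opt Act) (zero_sum_policy rps)" by (rule policy_rps)
  show "piddg_error Act scenarios P_private Cw Cl (zero_sum_policy rps) \<le> 1 / 8"
    unfolding piddg_error_example using private_values_rps by simp
  show "policy (opt Act) (opt Act) (zero_sum_policy biased)" by (rule policy_biased)
  show "piddg_pure Act scenarios P_private Cw Cl (zero_sum_policy biased)" by (rule piddg_pure_biased)
  show "piddg_error Act scenarios P_private Cw Cl (zero_sum_policy biased) \<le> 1 / 4"
    unfolding piddg_error_example using private_values_biased by simp
  show "1 / 8 \<le> piddg_error Act scenarios P_private Cw Cl M" if "policy (opt Act) (opt Act) M" for M
    using that by (rule piddg_error_example_lower)
  show "1 / 4 \<le> piddg_error Act scenarios P_private Cw Cl M"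
    if "policy (opt Act) (opt Act) M" "piddg_pure Act scenarios P_private Cw Cl M" for M
    using that by (rule piddg_error_example_pure)
qed simp

theorem proposition3p7:
  shows "(\<exists>(A1::nat set) (A2::nat set) (S::nat set) P C1 C2 u.
            ckdg A1 A2 S P C1 C2 u \<and>
            strict_min_gap (policy (opt A1) (opt A2)) (ckdg_pure S C1 C2) (ckdg_error S P C1 C2 u))
       \<and> (\<exists>(A::nat set) (S::nat set) P Cw Cl.
            ckddg A S P Cw Cl \<and>
            strict_min_gap (policy (opt A) (opt A)) (ckddg_pure S Cw Cl) (ckddg_error S P Cw Cl))
       \<and> (\<exists>(A::nat set) (S::nat set) P Cw Cl.
            ckddg A S P Cw Cl \<and>
            strict_min_gap (policy (opt A) (opt A)) (piddg_pure A S P Cw Cl) (piddg_error A S P Cw Cl))"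
proof -
  have ckddg_common: "ckddg Act scenarios P_common Cw Cl"
    by (rule ckddg_example[OF pmf_on_P_common])
  have ckddg_private: "ckddg Act scenarios P_private Cw Cl"
    by (rule ckddg_example[OF pmf_on_P_private])
  show ?thesis
    using ckdg_gap_of_ckddg_gap[OF ckddg_common ckddg_example_gap] ckddg_common ckddg_example_gap
      ckddg_private piddg_example_gap by blast
qed

end
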